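(* Let $n\ge2$ and $\mathcal G_n$, $z_e$ as in the context. Suppose $f\in\mathcal B(\mathcal G_n)$ with $f(z_e)\neq0$, and that $f_j\in A_{\mathbb C}(\mathcal G_n)$ for all $j\in\mathbb N$ with $f_j\to f$ uniformly. Then $\operatorname{supp}(f)=\{x\in\mathcal G_n:f(x)\neq0\}$ has nonempty interior.
   Context: Let $X=\{\mathbf 0,\mathbf 1\}$, $X^*$ the finite words (with empty word $\varnothing$), $X^\omega$ the infinite words, $C(\eta)=\{\eta w:w\in X^\omega\}$, $\mathbf 1^\infty$ the infinite word of ones. Fix $n\ge2$, a primitive polynomial $f_n$ of degree $n$ over $\mathbb F_2$ with root $\alpha$, and $\operatorname{Tr}(\beta)=\beta+\beta^2+\dots+\beta^{2^{n-1}}\in\mathbb F_2$. $\mathfrak G_n$ is the group of automorphisms of the binary rooted tree $X^*$ generated by $a$ ($a\cdot(\mathbf 0w)=\mathbf 1w$, $a\cdot(\mathbf 1w)=\mathbf 0w$) and $\iota_n(\beta)$, $\beta\in\mathbb F_{2^n}$, where $\iota_n(\beta)\cdot(\mathbf 0w)=\mathbf 0(a^{\operatorname{Tr}(\beta)}\cdot w)$, $\iota_n(\beta)\cdot(\mathbf 1w)=\mathbf 1(\iota_n(\alpha\beta)\cdot w)$; restrictions $g|_x$ are given by $g\cdot(xw)=(g\cdot x)(g|_x\cdot w)$; $e$ is the identity. $\mathcal G_n$ is the groupoid of germs of the action of the inverse semigroup $\{(\eta,g,\mu)\}\cup\{0\}$ on $X^\omega$ with $(\eta,g,\mu):C(\mu)\to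 C(\eta)$, $\mu w\mapsto\eta(g\cdot w)$; germs $[(\eta,g,\mu),w]$, $w\in C(\mu)$, with $[(\eta,g,\mu),w]=[(\eta',g',\mu'),w']$ iff $w=w'$ and some finite prefix $\nu=\mu\epsilon=\mu'\epsilon'$ of $w$ satisfies $\eta(g\cdot\epsilon)=\eta'(g'\cdot\epsilon')$ and $g|_\epsilon=g'|_{\epsilon'}$; basic open bisections $\{[s,w]:w\in U\}$. $z_e=[(\varnothing,e,\varnothing),\mathbf 1^\infty]$. $A_{\mathbb C}(\mathcal G_n)$ is the complex Steinberg algebra (span of characteristic functions of compact open bisections), and $\mathcal B(\mathcal G_n)$ is the space of bounded complex-valued functions on $\mathcal G_n$ with the uniform norm. *)

theory Defs
  imports Complex_Main
begin

text \<open>Alphabet X = {0,1} is rendered as bool (False = 0, True = 1).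
 The field F_{2^n} is an arbitrary finite field type 'k of cardinality 2^n,
 and alpha is a primitive element (root of a primitive polynomial f_n).\<close>

type_synonym fword = "bool list"
type_synonym iword = "nat \<Rightarrow> bool"
type_synonym tauto = "fword \<Rightarrow> fword"
type_synonym sgelem = "fword \<times> tauto \<times> fword"
type_synonym germ = "(sgelem \<times> iword) set"

definition trace :: "nat \<Rightarrow> 'k::field \<Rightarrow> 'k" where
  "trace n \<beta> = (\<Sum>i<n. \<beta> ^ (2 ^ i))"

fun flipa :: "fword \<Rightarrow> fword" where
  "flipa [] = []"
| "flipa (x # w) = (\<not> x) # w"

fun iota :: "nat \<Rightarrow> 'k::field \<Rightarrow> 'k \<Rightarrow> fword \<Rightarrow> fword" where
  "iota n \<alpha> \<beta> [] = []"
| "iota n \<alpha> \<beta> (False # w) = False # (if trace n \<beta> = 0 then w else flipa w)"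
| "iota n \<alpha> \<beta> (True # w) = True # iota n \<alpha> (\<alpha> * \<beta>) w"

inductive_set Gn :: "nat \<Rightarrow> 'k::field \<Rightarrow> tauto set" for n :: nat and \<alpha> :: "'k" where
  G_id: "id \<in> Gn n \<alpha>"
| G_a: "flipa \<in> Gn n \<alpha>"
| G_iota: "iota n \<alpha> \<beta> \<in> Gn n \<alpha>"
| G_comp: "g \<in> Gn n \<alpha> \<Longrightarrow> h \<in> Gn n \<alpha> \<Longrightarrow> g \<circ> h \<in> Gn n \<alpha>"
| G_inv: "g \<in> Gn n \<alpha> \<Longrightarrow> inv g \<in> Gn n \<alpha>"

text \<open>restriction (section) g|_x, defined by g(xw) = (g x)(g|_x w)\<close>
definition restr :: "tauto \<Rightarrow> fword \<Rightarrow> tauto" where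
  "restr g x = (\<lambda>w. drop (length x) (g (x @ w)))"

definition wpre :: "iword \<Rightarrow> nat \<Rightarrow> fword" where
  "wpre w k = map w [0..<k]"

definition conc :: "fword \<Rightarrow> iword \<Rightarrow> iword" where
  "conc \<eta> w = (\<lambda>i. if i < length \<eta> then \<eta> ! i else w (i - length \<eta>))"

definition act_inf :: "tauto \<Rightarrow> iword \<Rightarrow> iword" where
  "act_inf g w = (\<lambda>i. g (wpre w (Suc i)) ! i)"

definition cyl :: "fword \<Rightarrow> iword set" where
  "cyl \<eta> = {conc \<eta> w | w. True}"

definition shiftw :: "nat \<Rightarrow> iword \<Rightarrow> iword" where
  "shiftw k w = (\<lambda>i. w (i + k))"

definition cantor_open :: "iword set \<Rightarrow> bool" where
  "cantor_open V \<longleftrightarrow> (\<forall>w\<in>V. \<exists>k. cyl (wpre w k) \<subseteq> V)"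

definition GDom :: "nat \<Rightarrow> 'k::field \<Rightarrow> (sgelem \<times> iword) set" where
  "GDom n \<alpha> = {((\<eta>, g, \<mu>), w). g \<in> Gn n \<alpha> \<and> w \<in> cyl \<mu>}"

definition gerel :: "sgelem \<times> iword \<Rightarrow> sgelem \<times> iword \<Rightarrow> bool" where
  "gerel p q = (case p of ((\<eta>, g, \<mu>), w) \<Rightarrow> case q of ((\<eta>', g', \<mu>'), w') \<Rightarrow>
      w = w' \<and> (\<exists>\<epsilon> \<epsilon>'. wpre w (length (\<mu> @ \<epsilon>)) = \<mu> @ \<epsilon> \<and> \<mu> @ \<epsilon> = \<mu>' @ \<epsilon>'
                 \<and> \<eta> @ g \<epsilon> = \<eta>' @ g' \<epsilon>' \<and> restr g \<epsilon> = restr g' \<epsilon>'))"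

definition germ :: "nat \<Rightarrow> 'k::field \<Rightarrow> sgelem \<Rightarrow> iword \<Rightarrow> germ" where
  "germ n \<alpha> s w = {q \<in> GDom n \<alpha>. gerel (s, w) q}"

definition Grpd :: "nat \<Rightarrow> 'k::field \<Rightarrow> germ set" where
  "Grpd n \<alpha> = {germ n \<alpha> s w | s w. (s, w) \<in> GDom n \<alpha>}"

definition z_e :: "nat \<Rightarrow> 'k::field \<Rightarrow> germ" where
  "z_e n \<alpha> = germ n \<alpha> ([], id, []) (\<lambda>_. True)"

text \<open>source and range of a germ (independent of the representative)\<close>
definition gsrc :: "germ \<Rightarrow> iword" where
  "gsrc x = snd (SOME p. p \<in> x)"

definition grng :: "germ \<Rightarrow> iword" where
  "grng x = (case SOME p. p \<in> x of ((\<eta>, g, \<mu>), w) \<Rightarrow> conc \<eta> (act_inf g (shiftw (length \<mu>) w)))"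

definition bis :: "nat \<Rightarrow> 'k::field \<Rightarrow> sgelem \<Rightarrow> iword set \<Rightarrow> germ set" where
  "bis n \<alpha> s V = {germ n \<alpha> s w | w. w \<in> V}"

definition G_open :: "nat \<Rightarrow> 'k::field \<Rightarrow> germ set \<Rightarrow> bool" where
  "G_open n \<alpha> W \<longleftrightarrow> W \<subseteq> Grpd n \<alpha> \<and>
     (\<forall>x\<in>W. \<exists>\<eta> g \<mu> V. g \<in> Gn n \<alpha> \<and> cantor_open V \<and> V \<subseteq> cyl \<mu>
        \<and> x \<in> bis n \<alpha> (\<eta>, g, \<mu>) V \<and> bis n \<alpha> (\<eta>, g, \<mu>) V \<subseteq> W)"

definition G_compact :: "nat \<Rightarrow> 'k::field \<Rightarrow> germ set \<Rightarrow> bool" where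
  "G_compact n \<alpha> K \<longleftrightarrow> K \<subseteq> Grpd n \<alpha> \<and>
     (\<forall>\<U>. (\<forall>U\<in>\<U>. G_open n \<alpha> U) \<and> K \<subseteq> \<Union>\<U> \<longrightarrow>
        (\<exists>\<V>\<subseteq>\<U>. finite \<V> \<and> K \<subseteq> \<Union>\<V>))"

definition G_bisection :: "nat \<Rightarrow> 'k::field \<Rightarrow> germ set \<Rightarrow> bool" where
  "G_bisection n \<alpha> B \<longleftrightarrow> B \<subseteq> Grpd n \<alpha> \<and> inj_on gsrc B \<and> inj_on grng B"

definition compact_open_bisection :: "nat \<Rightarrow> 'k::field \<Rightarrow> germ set \<Rightarrow> bool" where
  "compact_open_bisection n \<alpha> B \<longleftrightarrow> G_open n \<alpha> B \<and> G_compact n \<alpha> B \<and> G_bisection n \<alpha> B"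

definition steinberg :: "nat \<Rightarrow> 'k::field \<Rightarrow> (germ \<Rightarrow> complex) set" where
  "steinberg n \<alpha> = {h. \<exists>(k::nat) (c::nat \<Rightarrow> complex) B.
      (\<forall>i<k. compact_open_bisection n \<alpha> (B i)) \<and>
      h = (\<lambda>x. \<Sum>i<k. c i * (if x \<in> B i then 1 else 0))}"

definition bounded_on_G :: "nat \<Rightarrow> 'k::field \<Rightarrow> (germ \<Rightarrow> complex) \<Rightarrow> bool" where
  "bounded_on_G n \<alpha> f \<longleftrightarrow> (\<exists>C. \<forall>x\<in>Grpd n \<alpha>. norm (f x) \<le> C)"

definition gsupp :: "nat \<Rightarrow> 'k::field \<Rightarrow> (germ \<Rightarrow> complex) \<Rightarrow> germ set" where
  "gsupp n \<alpha> f = {x \<in> Grpd n \<alpha>. f x \<noteq> 0}"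

end

(*
  Write z_b for the germ of \<iota>(b) at 1^\<infinity> (so z_0 = z_e) and x(k,s) for the germs of a^s on the
  cylinder 1^k 0. Since \<iota>(b) acts on 1^k 0 as a^Tr(\<alpha>^k b), the x(k,s) with s = [Tr(\<alpha>^k b) \<noteq> 0]
  converge to z_b. Conversely, since \<G>_n is contracting with nucleus {a^s \<iota>(b) a^t}, an open set
  B is covered by open sets which, for large k, contain x(k,s) only if s = [Tr(\<alpha>^k b) \<noteq> 0] for
  some z_b in B. By compactness, for large k a compact open bisection B contains x(k,s) iff
  s = [Tr(\<alpha>^k b) \<noteq> 0] for the unique z_b in B (never, if there is none). Hence a Steinberg function h has, for large k,
  h(x(k,s)) = \<Sum>\<^sub>i c\<^sub>i [s = [Tr(\<alpha>^k b\<^sub>i) \<noteq> 0]] and h(z_e) = \<Sum>{c\<^sub>i | b\<^sub>i = 0}. Over a period of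
  k \<mapsto> \<alpha>^k every b\<^sub>i \<noteq> 0 has nonzero trace for the same number A of k's, so
  A \<Sum>\<^sub>k h(x(k,0)) - (Q - A) \<Sum>\<^sub>k h(x(k,1)) = A Q h(z_e), where Q = 2^n - 1.
  If supp f had empty interior, f would vanish at some x(k,s) for all k and s; a uniform
  approximant of f in the Steinberg algebra would then be small at all of them, hence at z_e.
*)

theory Submission
  imports Defs "HOL-Computational_Algebra.Polynomial"
begin

section \<open>Characteristic two, primitive elements and the trace\<close>

lemma power2_add_char_two:
  fixes x y :: "'a::comm_ring_1"
  assumes "(1::'a) + 1 = 0"
  shows "(x + y) ^ 2 = x ^ 2 + y ^ 2"
proof -
  have "(x + y) ^ 2 = x ^ 2 + (1 + 1) * x * y + y ^ 2"
    by (simp add: power2_eq_square algebra_simps)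
  with assms show ?thesis by simp
qed

lemma power_two_power_add_char_two:
  fixes x y :: "'a::comm_ring_1"
  assumes "(1::'a) + 1 = 0"
  shows "(x + y) ^ (2 ^ i) = x ^ (2 ^ i) + y ^ (2 ^ i)"
proof (induction i)
  case (Suc i)
  have "(x + y) ^ (2 ^ Suc i) = ((x + y) ^ (2 ^ i)) ^ 2"
    by (simp add: power_mult[symmetric] mult.commute)
  also have "\<dots> = (x ^ (2 ^ i)) ^ 2 + (y ^ (2 ^ i)) ^ 2"
    using Suc power2_add_char_two[OF assms] by simp
  finally show ?case
    by (simp add: power_mult[symmetric] mult.commute)
qed simp

lemma power2_sum_char_two:
  fixes f :: "'b \<Rightarrow> 'a::comm_ring_1"
  assumes "(1::'a) + 1 = 0"
  shows "(\<Sum>i\<in>A. f i) ^ 2 = (\<Sum>i\<in>A. f i ^ 2)"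
  by (induction A rule: infinite_finite_induct) (simp_all add: power2_add_char_two[OF assms])

locale primitive_field =
  fixes n :: nat and \<alpha> :: "'k::{field,finite}"
  assumes two_le_n: "2 \<le> n"
    and card_field: "card (UNIV :: 'k set) = 2 ^ n"
    and primitive: "\<forall>\<beta>::'k. \<beta> \<noteq> 0 \<longrightarrow> (\<exists>k::nat. \<beta> = \<alpha> ^ k)"
begin

definition alpha_ord :: nat where "alpha_ord = 2 ^ n - 1"

lemma four_le_card: "4 \<le> card (UNIV :: 'k set)"
proof -
  have "(2::nat) ^ 2 \<le> 2 ^ n" using two_le_n by (intro power_increasing) auto
  thus ?thesis by (simp add: card_field)
qed

lemma alpha_ord_pos: "0 < alpha_ord"
  using four_le_card by (simp add: alpha_ord_def card_field)

lemma odd_alpha_ord: "odd alpha_ord"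
  using two_le_n by (simp add: alpha_ord_def)

lemma card_nonzero_eq_alpha_ord: "card (UNIV - {0::'k}) = alpha_ord"
  by (simp add: card_Diff_singleton card_field alpha_ord_def)

lemma alpha_nonzero: "\<alpha> \<noteq> 0"
proof
  assume "\<alpha> = 0"
  have "\<beta> \<in> {0, 1}" for \<beta> :: 'k
  proof (cases "\<beta> = 0")
    case False
    then obtain k where "\<beta> = \<alpha> ^ k" using primitive by blast
    thus ?thesis using \<open>\<alpha> = 0\<close> False by (cases k) auto
  qed simp
  hence "card (UNIV :: 'k set) \<le> card {0::'k, 1}" by (intro card_mono) auto
  also have "\<dots> \<le> 2" by (rule card_insert_le_m1) auto
  finally show False using four_le_card by simp
qed

lemma alpha_ord_le:
  assumes "\<alpha> ^ d = 1" "0 < d"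
  shows "alpha_ord \<le> d"
proof -
  have mod_eq: "\<alpha> ^ k = \<alpha> ^ (k mod d)" for k
    by (metis assms(1) mult.right_neutral power_add power_mult power_one div_mult_mod_eq mult.commute)
  have "UNIV - {0} \<subseteq> (\<lambda>r. \<alpha> ^ r) ` {..<d}"
  proof
    fix \<beta> :: 'k assume "\<beta> \<in> UNIV - {0}"
    then obtain k where "\<beta> = \<alpha> ^ k" using primitive by blast
    hence "\<beta> = \<alpha> ^ (k mod d)" using mod_eq by simp
    thus "\<beta> \<in> (\<lambda>r. \<alpha> ^ r) ` {..<d}" using assms(2) by simp
  qed
  hence "card (UNIV - {0::'k}) \<le> card {..<d}"
    by (meson card_image_le card_mono finite_imageI finite_lessThan order_trans)
  thus ?thesis by (simp add: card_nonzero_eq_alpha_ord)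
qed

lemma alpha_power_eq_iff:
  assumes "i \<le> j" shows "\<alpha> ^ i = \<alpha> ^ j \<longleftrightarrow> \<alpha> ^ (j - i) = 1"
proof -
  have "\<alpha> ^ j = \<alpha> ^ i * \<alpha> ^ (j - i)"
    using assms by (simp add: power_add[symmetric])
  thus ?thesis using alpha_nonzero by auto
qed

lemma power_alpha_ord: "\<alpha> ^ alpha_ord = 1"
proof -
  have "\<not> inj_on (\<lambda>k. \<alpha> ^ k) {..alpha_ord}"
  proof
    assume "inj_on (\<lambda>k. \<alpha> ^ k) {..alpha_ord}"
    hence "card {..alpha_ord} \<le> card (UNIV - {0::'k})"
      using alpha_nonzero by (intro card_inj_on_le) auto
    thus False by (simp add: card_nonzero_eq_alpha_ord)
  qed
  then obtain i j where ij: "i < j" "j \<le> alpha_ord" "\<alpha> ^ i = \<alpha> ^ j"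
    by (metis (no_types, lifting) atMost_iff inj_onI linorder_less_linear)
  hence "\<alpha> ^ (j - i) = 1" by (simp add: alpha_power_eq_iff)
  moreover have "j - i = alpha_ord"
    using alpha_ord_le[OF calculation] ij by simp
  ultimately show ?thesis by simp
qed

lemma power_alpha_mod: "\<alpha> ^ k = \<alpha> ^ (k mod alpha_ord)"
  by (metis power_alpha_ord mult.right_neutral power_add power_mult power_one
      div_mult_mod_eq mult.commute)

lemma alpha_power_eq_one_iff: "\<alpha> ^ d = 1 \<longleftrightarrow> alpha_ord dvd d"
proof
  assume "\<alpha> ^ d = 1"
  hence "\<alpha> ^ (d mod alpha_ord) = 1" by (simp add: power_alpha_mod[of d, symmetric])
  hence "\<not> 0 < d mod alpha_ord"
    using alpha_ord_le[of "d mod alpha_ord"] alpha_ord_pos by (metis mod_less_divisor not_le)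
  thus "alpha_ord dvd d" by auto
qed (auto simp: power_mult power_alpha_ord)

lemma bij_betw_alpha_powers:
  assumes "b \<noteq> 0"
  shows "bij_betw (\<lambda>k. \<alpha> ^ k * b) {K..<K + alpha_ord} (UNIV - {0})"
proof -
  have "inj_on (\<lambda>k. \<alpha> ^ k * b) {K..<K + alpha_ord}"
  proof (rule linorder_inj_onI', rule notI)
    fix i j assume "i \<in> {K..<K + alpha_ord}" "j \<in> {K..<K + alpha_ord}" "i < j"
      and "\<alpha> ^ i * b = \<alpha> ^ j * b"
    with assms have "\<alpha> ^ (j - i) = 1" by (simp add: alpha_power_eq_iff)
    with alpha_ord_le have "alpha_ord \<le> j - i" using \<open>i < j\<close> by simp
    with \<open>i \<in> _\<close> \<open>j \<in> _\<close> show False by auto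
  qed
  moreover have "(\<lambda>k. \<alpha> ^ k * b) ` {K..<K + alpha_ord} \<subseteq> UNIV - {0}"
    using assms alpha_nonzero by auto
  ultimately show ?thesis
    by (simp add: bij_betw_def card_subset_eq card_image card_nonzero_eq_alpha_ord)
qed

lemma one_add_one_eq_zero: "(1::'k) + 1 = 0"
proof (rule ccontr)
  assume "(1::'k) + 1 \<noteq> 0"
  hence "(-1::'k) \<noteq> 1" by (metis add_eq_0_iff)
  obtain m where m: "(-1::'k) = \<alpha> ^ m" using primitive by (metis neg_equal_0_iff_equal one_neq_zero)
  have "\<alpha> ^ (2 * m) = 1" by (simp add: power_mult[symmetric] m[symmetric] mult.commute power_mult)
  hence "alpha_ord dvd 2 * m" by (simp add: alpha_power_eq_one_iff)
  hence "alpha_ord dvd m"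
    using odd_alpha_ord by (simp add: coprime_dvd_mult_right_iff coprime_commute)
  hence "(-1::'k) = 1" by (simp add: m alpha_power_eq_one_iff)
  with \<open>(-1::'k) \<noteq> 1\<close> show False ..
qed

lemma add_self_eq_zero: "x + x = (0::'k)"
  using one_add_one_eq_zero by (metis distrib_left mult.right_neutral mult_zero_right)

lemma power_card_eq_self: "x ^ (2 ^ n) = (x::'k)"
proof (cases "x = 0")
  case False
  then obtain m where m: "x = \<alpha> ^ m" using primitive by blast
  have "(2::nat) ^ n = Suc alpha_ord" by (simp add: alpha_ord_def)
  hence "x ^ (2 ^ n) = x * (\<alpha> ^ m) ^ alpha_ord" using m by simp
  also have "(\<alpha> ^ m) ^ alpha_ord = (\<alpha> ^ alpha_ord) ^ m"
    by (simp add: power_mult[symmetric] mult.commute)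
  finally show ?thesis by (simp add: power_alpha_ord)
qed simp

lemma trace_add: "trace n (x + y) = trace n x + trace n (y::'k)"
  unfolding trace_def by (simp add: power_two_power_add_char_two[OF one_add_one_eq_zero] sum.distrib)

lemma trace_zero [simp]: "trace n (0::'k) = 0"
  unfolding trace_def by (simp add: power_0_left)

lemma trace_square: "trace n x ^ 2 = trace n (x::'k)"
proof -
  let ?f = "\<lambda>i. x ^ (2 ^ i)"
  have "trace n x ^ 2 = (\<Sum>i<n. ?f (Suc i))"
    unfolding trace_def power2_sum_char_two[OF one_add_one_eq_zero]
    by (simp add: power_mult[symmetric] mult.commute)
  moreover have "(\<Sum>i<Suc n. ?f i) = ?f 0 + (\<Sum>i<n. ?f (Suc i))"
    by (rule sum.lessThan_Suc_shift)
  moreover have "(\<Sum>i<Suc n. ?f i) = trace n x + ?f n"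
    unfolding trace_def by (rule sum.lessThan_Suc)
  moreover have "?f n = ?f 0" by (simp add: power_card_eq_self)
  ultimately show ?thesis by (simp add: add.commute)
qed

lemma trace_zero_or_one: "trace n x = 0 \<or> trace n (x::'k) = 1"
proof -
  have "trace n x * (trace n x - 1) = 0"
    using trace_square[of x] by (simp add: power2_eq_square algebra_simps)
  thus ?thesis by simp
qed

lemma trace_add_nonzero_iff:
  "trace n (x + y) \<noteq> 0 \<longleftrightarrow> (trace n x \<noteq> 0) \<noteq> (trace n (y::'k) \<noteq> 0)"
  using trace_zero_or_one[of x] trace_zero_or_one[of y] one_add_one_eq_zero by (auto simp: trace_add)

text \<open>The trace is a nonzero polynomial of degree \<open>2^(n-1) < 2^n\<close>, so it cannot vanish on the whole field.\<close>
lemma trace_nonzero_exists: "\<exists>x::'k. trace n x \<noteq> 0"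
proof (rule ccontr)
  define p :: "'k poly" where "p = (\<Sum>i<n. monom 1 (2 ^ i))"
  assume "\<not> ?thesis"
  hence "{x. poly p x = 0} = UNIV"
    by (simp add: p_def trace_def poly_sum poly_monom)
  moreover have "coeff p (2 ^ (n - 1)) = 1"
  proof -
    have "coeff p (2 ^ (n - 1)) = (\<Sum>i<n. if i = n - 1 then 1 else 0)"
      unfolding p_def coeff_sum by (intro sum.cong) auto
    also have "\<dots> = 1" using two_le_n by simp
    finally show ?thesis .
  qed
  hence "card {x. poly p x = 0} \<le> degree p"
    by (intro card_poly_roots_bound) auto
  moreover have "degree p \<le> 2 ^ (n - 1)" unfolding p_def
    by (rule degree_sum_le) (auto intro: order_trans[OF degree_monom_le])
  moreover have "(2::nat) ^ (n - 1) < 2 ^ n" using two_le_n by simp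
  ultimately show False using card_field by simp
qed

definition trace_bit :: "nat \<Rightarrow> 'k \<Rightarrow> bool" where
  "trace_bit k b \<longleftrightarrow> trace n (\<alpha> ^ k * b) \<noteq> 0"

lemma trace_bit_zero [simp]: "\<not> trace_bit k 0"
  by (simp add: trace_bit_def)

lemma card_trace_bit_window:
  assumes "b \<noteq> 0"
  shows "card {k \<in> {K..<K + alpha_ord}. trace_bit k b} = card {x::'k. trace n x \<noteq> 0}"
proof -
  let ?h = "\<lambda>k. \<alpha> ^ k * b" and ?W = "{K..<K + alpha_ord}"
  have bij: "bij_betw ?h ?W (UNIV - {0})" by (rule bij_betw_alpha_powers[OF assms])
  have "?h ` {k \<in> ?W. trace_bit k b} = {x \<in> ?h ` ?W. trace n x \<noteq> 0}"
    by (auto simp: trace_bit_def)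
  also have "\<dots> = {x. trace n x \<noteq> 0}"
    using bij by (auto simp: bij_betw_def)
  finally have img: "?h ` {k \<in> ?W. trace_bit k b} = {x. trace n x \<noteq> 0}" .
  have "inj_on ?h {k \<in> ?W. trace_bit k b}"
    using bij by (auto simp: bij_betw_def intro: inj_on_subset)
  from card_image[OF this] img show ?thesis by simp
qed

lemma card_not_trace_bit_window:
  assumes "b \<noteq> 0"
  shows "card {k \<in> {K..<K + alpha_ord}. \<not> trace_bit k b} = alpha_ord - card {x::'k. trace n x \<noteq> 0}"
proof -
  have "{k \<in> {K..<K + alpha_ord}. \<not> trace_bit k b}
      = {K..<K + alpha_ord} - {k \<in> {K..<K + alpha_ord}. trace_bit k b}" by auto
  also have "card \<dots> = alpha_ord - card {k \<in> {K..<K + alpha_ord}. trace_bit k b}"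
    by (subst card_Diff_subset) auto
  finally show ?thesis by (simp only: card_trace_bit_window[OF assms])
qed

lemma card_trace_nonzero_bounds:
  "0 < card {x::'k. trace n x \<noteq> 0}" "card {x::'k. trace n x \<noteq> 0} \<le> alpha_ord"
proof -
  show "0 < card {x::'k. trace n x \<noteq> 0}"
    using trace_nonzero_exists by (auto simp: card_gt_0_iff)
  have "{x::'k. trace n x \<noteq> 0} \<subseteq> UNIV - {0}" by auto
  from card_mono[OF _ this] show "card {x::'k. trace n x \<noteq> 0} \<le> alpha_ord"
    by (simp add: card_nonzero_eq_alpha_ord)
qed

end

section \<open>Sections of tree maps\<close>

definition tree_endo :: "tauto \<Rightarrow> bool" where
  "tree_endo g \<longleftrightarrow> (\<forall>u. length (g u) = length u) \<and> (\<forall>u w. take (length u) (g (u @ w)) = g u)"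

lemma tree_endo_length: "tree_endo g \<Longrightarrow> length (g u) = length u"
  by (simp add: tree_endo_def)

lemma tree_endo_append: "tree_endo g \<Longrightarrow> g (u @ w) = g u @ restr g u w"
  unfolding tree_endo_def restr_def by (metis append_take_drop_id)

lemma tree_endoI:
  assumes "\<And>u. length (g u) = length u" "\<And>u w. g (u @ w) = g u @ restr g u w"
  shows "tree_endo g"
  using assms unfolding tree_endo_def by (metis append_eq_conv_conj)

lemma restr_restr: "restr (restr g u) v = restr g (u @ v)"
  by (simp add: restr_def fun_eq_iff add.commute)

lemma restr_Nil [simp]: "restr g [] = g"
  by (simp add: restr_def fun_eq_iff)

lemma restr_comp:
  assumes "tree_endo g"
  shows "restr (f \<circ> g) u = restr f (g u) \<circ> restr g u"
  using tree_endo_append[OF assms] tree_endo_length[OF assms] by (simp add: restr_def fun_eq_iff)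

lemma tree_endo_comp:
  assumes "tree_endo f" "tree_endo g" shows "tree_endo (f \<circ> g)"
  using assms by (intro tree_endoI) (simp_all add: tree_endo_length tree_endo_append restr_comp)

lemma tree_endo_id: "tree_endo id"
  by (simp add: tree_endo_def)

lemma flipa_flipa [simp]: "flipa (flipa w) = w"
  by (cases w) auto

definition flip_if :: "bool \<Rightarrow> tauto" where
  "flip_if s = (if s then flipa else id)"

lemma flip_if_False [simp]: "flip_if False = id"
  by (simp add: flip_if_def)

lemma flip_if_True: "flip_if True = flipa"
  by (simp add: flip_if_def)

lemma flip_if_Nil [simp]: "flip_if s [] = []"
  by (simp add: flip_if_def)

lemma flip_if_Cons [simp]: "flip_if s (x # w) = (x \<noteq> s) # w"
  by (simp add: flip_if_def)

lemma length_flip_if [simp]: "length (flip_if s w) = length w"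
  by (cases w) simp_all

lemma take_flip_if_append [simp]: "take (length u) (flip_if s (u @ w)) = flip_if s u"
  by (cases u) simp_all

lemma restr_flip_if_Cons [simp]: "restr (flip_if s) (x # u) = id"
  by (simp add: restr_def fun_eq_iff)

lemma tree_endo_flip_if: "tree_endo (flip_if s)"
  by (rule tree_endoI; case_tac u) (auto simp: restr_def)

lemma flip_if_comp: "flip_if s \<circ> flip_if t = flip_if (s \<noteq> t)"
  by (auto simp: fun_eq_iff flip_if_def neq_Nil_conv)

lemma flip_if_eq_restr_eq_imp_eq:
  assumes "flip_if s \<epsilon> = flip_if t \<epsilon>" "restr (flip_if s) \<epsilon> = restr (flip_if t) \<epsilon>"
  shows "s = t"
proof (cases \<epsilon>)
  case Nil
  with assms(2) have "flip_if s [True] = flip_if t [True]" by simp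
  thus ?thesis by simp
qed (use assms(1) in auto)

lemma flip_if_comp_assoc: "flip_if s \<circ> (flip_if t \<circ> f) = flip_if (s \<noteq> t) \<circ> f"
  by (simp add: flip_if_comp comp_assoc[symmetric])

definition compose_list :: "('a \<Rightarrow> 'a) list \<Rightarrow> 'a \<Rightarrow> 'a" where
  "compose_list fs = foldr (\<circ>) fs id"

lemma compose_list_Nil [simp]: "compose_list [] = id"
  by (simp add: compose_list_def)

lemma compose_list_Cons [simp]: "compose_list (f # fs) = f \<circ> compose_list fs"
  by (simp add: compose_list_def)

lemma compose_list_append: "compose_list (fs @ gs) = compose_list fs \<circ> compose_list gs"
  by (induction fs) (simp_all add: comp_assoc)

lemma compose_list_rev_involutions:
  assumes "\<forall>f\<in>set fs. f \<circ> f = id"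
  shows "compose_list fs \<circ> compose_list (rev fs) = id"
  using assms
proof (induction fs)
  case (Cons f fs)
  have IH: "compose_list fs \<circ> compose_list (rev fs) = id" using Cons.IH Cons.prems by (meson list.set_intros(2))
  have ff: "f \<circ> f = id" using Cons.prems by (meson list.set_intros(1))
  have "compose_list (f # fs) \<circ> compose_list (rev (f # fs))
      = f \<circ> (compose_list fs \<circ> compose_list (rev fs)) \<circ> f"
    by (simp add: compose_list_append comp_assoc)
  also have "\<dots> = id"
    by (simp only: IH comp_id ff)
  finally show ?case .
qed simp

lemma inv_compose_list_involutions:
  assumes "\<forall>f\<in>set fs. f \<circ> f = id"
  shows "inv (compose_list fs) = compose_list (rev fs)"
proof (rule inv_unique_comp)
  show "compose_list fs \<circ> compose_list (rev fs) = id"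
    by (rule compose_list_rev_involutions[OF assms])
  show "compose_list (rev fs) \<circ> compose_list fs = id"
    using compose_list_rev_involutions[of "rev fs"] assms by simp
qed

lemma tree_endo_compose_list: "\<forall>f\<in>set fs. tree_endo f \<Longrightarrow> tree_endo (compose_list fs)"
  by (induction fs) (auto intro: tree_endo_id tree_endo_comp)

section \<open>The generators of \<G>_n and its nucleus\<close>

abbreviation ones :: "nat \<Rightarrow> fword" where "ones k \<equiv> replicate k True"

lemma iota_False [simp]: "iota n \<alpha> b (False # w) = False # flip_if (trace n b \<noteq> 0) w"
  by (simp add: flip_if_def)

declare iota.simps(2) [simp del]

lemma iota_single [simp]: "iota n \<alpha> b [x] = [x]"
  by (cases x) simp_all

lemma take_iota_append: "take (length u) (iota n \<alpha> b (u @ w)) = iota n \<alpha> b u"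
proof (induction u arbitrary: b)
  case (Cons x u)
  thus ?case by (cases x) simp_all
qed simp

lemma length_iota [simp]: "length (iota n \<alpha> b w) = length w"
  by (induction n \<alpha> b w rule: iota.induct) simp_all

lemma tree_endo_iota: "tree_endo (iota n \<alpha> b)"
  by (simp add: tree_endo_def take_iota_append)

lemma restr_iota_True [simp]: "restr (iota n \<alpha> b) [True] = iota n \<alpha> (\<alpha> * b)"
  by (simp add: restr_def fun_eq_iff)

lemma restr_iota_False [simp]: "restr (iota n \<alpha> b) [False] = flip_if (trace n b \<noteq> 0)"
  by (simp add: restr_def fun_eq_iff)

lemma iota_ones: "iota n \<alpha> b (ones j @ w) = ones j @ iota n \<alpha> (\<alpha> ^ j * b) w"
  by (induction j arbitrary: b) (simp_all add: mult.assoc mult.left_commute)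

lemma iota_fixes_ones [simp]: "iota n \<alpha> b (ones j) = ones j"
  using iota_ones[of n \<alpha> b j "[]"] by simp

lemma restr_iota_ones: "restr (iota n \<alpha> b) (ones j) = iota n \<alpha> (\<alpha> ^ j * b)"
  by (simp add: restr_def fun_eq_iff iota_ones)

context primitive_field
begin

lemma iota_comp: "iota n \<alpha> b \<circ> iota n \<alpha> c = iota n \<alpha> (b + c)"
proof
  fix w show "(iota n \<alpha> b \<circ> iota n \<alpha> c) w = iota n \<alpha> (b + c) w"
  proof (induction w arbitrary: b c)
    case (Cons x w)
    thus ?case
      using trace_add_nonzero_iff[of b c]
      by (cases x) (auto simp: distrib_left flip_if_def)
  qed simp
qed

lemma iota_zero: "iota n \<alpha> 0 = id"
proof
  fix w show "iota n \<alpha> 0 w = id w"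
  proof (induction w)
    case (Cons x w) thus ?case by (cases x) simp_all
  qed simp
qed

lemma iota_ones_False:
  "iota n \<alpha> b (ones j @ False # w) = ones j @ False # flip_if (trace_bit j b) w"
  by (simp add: iota_ones trace_bit_def)

lemma restr_iota_ones_False: "restr (iota n \<alpha> b) (ones j @ [False]) = flip_if (trace_bit j b)"
  by (simp add: restr_def fun_eq_iff iota_ones_False)

lemma iota_involution: "iota n \<alpha> b \<circ> iota n \<alpha> b = id"
  by (simp add: iota_comp add_self_eq_zero iota_zero)

definition nucleus :: "tauto set" where
  "nucleus = {flip_if s \<circ> iota n \<alpha> b \<circ> flip_if t | s b t. True}"

lemma nucleusI: "flip_if s \<circ> iota n \<alpha> b \<circ> flip_if t \<in> nucleus"
  unfolding nucleus_def by blast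

lemma iota_in_nucleus: "iota n \<alpha> b \<in> nucleus"
  using nucleusI[of False b False] by simp

lemma flip_if_in_nucleus: "flip_if s \<in> nucleus"
  using nucleusI[of s 0 False] by (simp add: iota_zero)

lemma tree_endo_nucleus: "c \<in> nucleus \<Longrightarrow> tree_endo c"
  by (auto simp: nucleus_def intro!: tree_endo_comp tree_endo_flip_if tree_endo_iota)

lemma restr_nucleus_single:
  assumes "c \<in> nucleus" shows "restr c [x] \<in> nucleus"
proof -
  obtain s b t where c: "c = flip_if s \<circ> iota n \<alpha> b \<circ> flip_if t"
    using assms by (auto simp: nucleus_def)
  have "restr c [x] = restr (iota n \<alpha> b) [x \<noteq> t]"
    by (simp add: c restr_comp tree_endo_flip_if tree_endo_iota tree_endo_comp)
  thus ?thesis by (cases "x \<noteq> t") (simp_all add: iota_in_nucleus flip_if_in_nucleus)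
qed

lemma restr_nucleus: "c \<in> nucleus \<Longrightarrow> restr c u \<in> nucleus"
proof (induction u arbitrary: c)
  case (Cons x u)
  have "restr c (x # u) = restr (restr c [x]) u" by (simp add: restr_restr)
  thus ?case using Cons restr_nucleus_single by simp
qed simp

lemma restr_comp_nucleus_single:
  assumes "c \<in> nucleus" "d \<in> nucleus" shows "restr (c \<circ> d) [x] \<in> nucleus"
proof -
  obtain s b t s' b' t' where
    c: "c = flip_if s \<circ> iota n \<alpha> b \<circ> flip_if t" and
    d: "d = flip_if s' \<circ> iota n \<alpha> b' \<circ> flip_if t'"
    using assms by (auto simp: nucleus_def)
  have cd: "c \<circ> d = flip_if s \<circ> (iota n \<alpha> b \<circ> (flip_if (t \<noteq> s') \<circ> iota n \<alpha> b')) \<circ> flip_if t'"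
    by (simp add: c d comp_assoc flip_if_comp_assoc)
  show ?thesis
  proof (cases "t = s'")
    case True
    hence "c \<circ> d = flip_if s \<circ> iota n \<alpha> (b + b') \<circ> flip_if t'"
      by (simp add: cd iota_comp)
    thus ?thesis using restr_nucleus_single nucleusI by metis
  next
    case False
    txt \<open>Below one letter, one of the two iotas of \<open>\<iota>(b) a \<iota>(b')\<close> turns into a power of \<open>a\<close>.\<close>
    have "restr (c \<circ> d) [x] = restr (iota n \<alpha> b \<circ> (flip_if True \<circ> iota n \<alpha> b')) [x \<noteq> t']"
      unfolding cd using False by (simp add: restr_comp tree_endo_flip_if tree_endo_iota tree_endo_comp)
    also have "\<dots> \<in> nucleus"
      using nucleusI[of "trace n b \<noteq> 0" "\<alpha> * b'" False] nucleusI[of False "\<alpha> * b" "trace n b' \<noteq> 0"]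
      by (cases "x \<noteq> t'") (simp_all add: restr_comp tree_endo_flip_if tree_endo_iota tree_endo_comp)
    finally show ?thesis .
  qed
qed

lemma restr_compose_list_nucleus:
  assumes "set cs \<subseteq> nucleus"
  shows "\<exists>J. \<forall>u. J \<le> length u \<longrightarrow> restr (compose_list cs) u \<in> nucleus"
  using assms
proof (induction cs)
  case Nil
  have "compose_list [] = flip_if False" by simp
  thus ?case using restr_nucleus[OF flip_if_in_nucleus] by metis
next
  case (Cons c cs)
  then obtain J where J: "\<forall>u. J \<le> length u \<longrightarrow> restr (compose_list cs) u \<in> nucleus" by auto
  let ?g = "compose_list cs"
  have g: "tree_endo ?g"
    using Cons.prems by (intro tree_endo_compose_list) (auto intro: tree_endo_nucleus)
  have "restr (c \<circ> ?g) u \<in> nucleus" if "Suc J \<le> length u" for u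
  proof -
    define u0 where "u0 = take J u"
    have u: "u = u0 @ [u ! J] @ drop (Suc J) u"
      using that id_take_nth_drop[of J u] by (simp add: u0_def)
    have "restr (c \<circ> ?g) u0 = restr c (?g u0) \<circ> restr ?g u0"
      by (rule restr_comp[OF g])
    moreover have "restr c (?g u0) \<in> nucleus" "restr ?g u0 \<in> nucleus"
      using Cons.prems J that by (auto simp: u0_def intro: restr_nucleus)
    ultimately have "restr (c \<circ> ?g) (u0 @ [u ! J]) \<in> nucleus"
      by (metis restr_restr restr_comp_nucleus_single)
    hence "restr (c \<circ> ?g) ((u0 @ [u ! J]) @ drop (Suc J) u) \<in> nucleus"
      by (metis restr_restr restr_nucleus)
    thus ?thesis using u by simp
  qed
  thus ?case unfolding compose_list_Cons by blast
qed

lemma Gn_compose_list_generators: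
  assumes "g \<in> Gn n \<alpha>"
  shows "\<exists>cs. set cs \<subseteq> insert (flip_if True) (range (iota n \<alpha>)) \<and> g = compose_list cs"
  using assms
proof (induction rule: Gn.induct)
  case G_id show ?case by (rule exI[of _ "[]"]) simp
next
  case G_a show ?case by (rule exI[of _ "[flip_if True]"]) (simp add: flip_if_True)
next
  case (G_iota \<beta>) show ?case by (rule exI[of _ "[iota n \<alpha> \<beta>]"]) simp
next
  case (G_comp g h)
  then obtain cs ds where "set cs \<subseteq> insert (flip_if True) (range (iota n \<alpha>))" "g = compose_list cs"
    "set ds \<subseteq> insert (flip_if True) (range (iota n \<alpha>))" "h = compose_list ds" by blast
  moreover from this have "g \<circ> h = compose_list (cs @ ds)" by (simp only: compose_list_append)
  ultimately show ?case by (intro exI[of _ "cs @ ds"]) simp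
next
  case (G_inv g)
  then obtain cs where cs: "set cs \<subseteq> insert (flip_if True) (range (iota n \<alpha>))" "g = compose_list cs"
    by blast
  moreover have "\<forall>c\<in>set cs. c \<circ> c = id"
    using cs(1) by (auto simp: flip_if_comp iota_involution)
  ultimately show ?case by (intro exI[of _ "rev cs"]) (simp add: inv_compose_list_involutions)
qed

lemma Gn_tree_endo: "g \<in> Gn n \<alpha> \<Longrightarrow> tree_endo g"
  using Gn_compose_list_generators tree_endo_compose_list tree_endo_flip_if tree_endo_iota by blast

lemma Gn_eventually_restr_nucleus:
  assumes "g \<in> Gn n \<alpha>"
  shows "\<exists>J. \<forall>u. J \<le> length u \<longrightarrow> restr g u \<in> nucleus"
proof -
  obtain cs where "set cs \<subseteq> insert (flip_if True) (range (iota n \<alpha>))" "g = compose_list cs"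
    using Gn_compose_list_generators[OF assms] by blast
  moreover have "insert (flip_if True) (range (iota n \<alpha>)) \<subseteq> nucleus"
    using flip_if_in_nucleus iota_in_nucleus by blast
  ultimately show ?thesis using restr_compose_list_nucleus by blast
qed

lemma flip_if_Gn: "flip_if s \<in> Gn n \<alpha>"
  by (simp add: flip_if_def Gn.intros)

lemma nucleus_fixing_ones_restr_iota:
  assumes "c \<in> nucleus" "c (True # True # w) = True # True # w'"
  shows "\<exists>j \<gamma>. j \<le> 1 \<and> c (ones j) = ones j \<and> restr c (ones j) = iota n \<alpha> \<gamma>"
proof -
  obtain s b t where c: "c = flip_if s \<circ> iota n \<alpha> b \<circ> flip_if t"
    using assms(1) by (auto simp: nucleus_def)
  show ?thesis
  proof (cases t)
    case False
    with assms(2) have "\<not> s" by (simp add: c)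
    with False show ?thesis by (intro exI[of _ 0] exI[of _ b]) (simp add: c)
  next
    case True
    with assms(2) have "s" "trace n b = 0" by (auto simp: c)
    with True have "c [True] = [True]" "restr c [True] = iota n \<alpha> 0"
      by (simp_all add: c restr_comp tree_endo_flip_if tree_endo_iota tree_endo_comp iota_zero)
    thus ?thesis by (intro exI[of _ 1] exI[of _ 0]) simp
  qed
qed

lemma Gn_fixing_ones_restr_iota:
  assumes "g \<in> Gn n \<alpha>"
  shows "\<exists>J. \<forall>k. J \<le> k \<longrightarrow> g (ones k) = ones k \<longrightarrow>
           (\<exists>j \<gamma>. j \<le> k \<and> g (ones j) = ones j \<and> restr g (ones j) = iota n \<alpha> \<gamma>)"
proof -
  have g: "tree_endo g" by (rule Gn_tree_endo[OF assms])
  obtain J where J: "\<forall>u. J \<le> length u \<longrightarrow> restr g u \<in> nucleus"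
    using Gn_eventually_restr_nucleus[OF assms] by blast
  define c where "c = restr g (ones J)"
  have "\<exists>j \<gamma>. j \<le> k \<and> g (ones j) = ones j \<and> restr g (ones j) = iota n \<alpha> \<gamma>"
    if k: "J + 2 \<le> k" and fix_k: "g (ones k) = ones k" for k
  proof -
    obtain d where d: "k = J + 2 + d" using k le_iff_add by blast
    have ones_k: "ones k = ones J @ True # True # ones (k - J - 2)"
      by (simp add: d replicate_add numeral_2_eq_2 replicate_app_Cons_same)
    have "g (ones J) @ c (True # True # ones (k - J - 2)) = ones J @ True # True # ones (k - J - 2)"
      using fix_k tree_endo_append[OF g] by (simp add: ones_k c_def)
    hence gJ: "g (ones J) = ones J" and "c (True # True # ones (k - J - 2)) = True # True # ones (k - J - 2)"
      using tree_endo_length[OF g, of "ones J"] by simp_all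
    moreover have "c \<in> nucleus" using J by (simp add: c_def)
    ultimately obtain j \<gamma> where j: "j \<le> 1" "c (ones j) = ones j" "restr c (ones j) = iota n \<alpha> \<gamma>"
      using nucleus_fixing_ones_restr_iota by blast
    have "g (ones (J + j)) = ones (J + j)"
      using tree_endo_append[OF g, of "ones J" "ones j"] gJ j(2) by (simp add: replicate_add c_def)
    moreover have "restr g (ones (J + j)) = iota n \<alpha> \<gamma>"
      using j(3) by (simp add: replicate_add c_def restr_restr)
    moreover have "J + j \<le> k" using j(1) k by simp
    ultimately show ?thesis by blast
  qed
  thus ?thesis by (intro exI[of _ "J + 2"]) blast
qed

end

section \<open>Cylinders in Cantor space\<close>

lemma length_wpre [simp]: "length (wpre w k) = k"
  by (simp add: wpre_def)

lemma wpre_nth: "i < k \<Longrightarrow> wpre w k ! i = w i"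
  by (simp add: wpre_def)

lemma wpre_add: "wpre w (a + b) = wpre w a @ wpre (shiftw a w) b"
  by (rule nth_equalityI) (auto simp: wpre_def shiftw_def nth_append add.commute)

lemma wpre_const_True [simp]: "wpre (\<lambda>_. True) k = ones k"
  by (simp add: wpre_def map_replicate_const)

lemma wpre_conc: "wpre (conc \<mu> v) (length \<mu>) = \<mu>"
  by (rule nth_equalityI) (auto simp: wpre_def conc_def)

lemma conc_shiftw:
  assumes "wpre w (length \<mu>) = \<mu>" shows "conc \<mu> (shiftw (length \<mu>) w) = w"
proof
  fix i
  have "\<mu> ! i = w i" if "i < length \<mu>"
    using wpre_nth[OF that, of w] assms by simp
  thus "conc \<mu> (shiftw (length \<mu>) w) i = w i"
    by (simp add: conc_def shiftw_def)
qed

lemma mem_cyl_iff: "w \<in> cyl \<mu> \<longleftrightarrow> wpre w (length \<mu>) = \<mu>"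
  using conc_shiftw[of w \<mu>, symmetric] by (auto simp: cyl_def wpre_conc)

lemma conc_in_cyl: "conc \<mu> v \<in> cyl \<mu>"
  by (auto simp: cyl_def)

lemma cyl_append_subset: "cyl (u @ v) \<subseteq> cyl u"
  by (auto simp: mem_cyl_iff wpre_add[of _ "length u" "length v", simplified])

lemma cyl_wpre_mono: "k \<le> m \<Longrightarrow> cyl (wpre w m) \<subseteq> cyl (wpre w k)"
  using cyl_append_subset[of "wpre w k" "wpre (shiftw k w) (m - k)"] by (simp add: wpre_add[symmetric])

lemma cantor_open_cyl: "cantor_open (cyl u)"
  unfolding cantor_open_def by (auto simp: mem_cyl_iff intro!: exI[of _ "length u"])

lemma cantor_open_Int:
  assumes "cantor_open A" "cantor_open B" shows "cantor_open (A \<inter> B)"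
  unfolding cantor_open_def
proof
  fix w assume "w \<in> A \<inter> B"
  then obtain a b where "cyl (wpre w a) \<subseteq> A" "cyl (wpre w b) \<subseteq> B"
    using assms unfolding cantor_open_def by blast
  hence "cyl (wpre w (max a b)) \<subseteq> A \<inter> B"
    using cyl_wpre_mono[of a "max a b" w] cyl_wpre_mono[of b "max a b" w] by auto
  thus "\<exists>k. cyl (wpre w k) \<subseteq> A \<inter> B" ..
qed

section \<open>Germs\<close>

lemma gerel_iff:
  "gerel ((\<eta>, g, \<mu>), w) ((\<eta>', g', \<mu>'), w') \<longleftrightarrow> w = w' \<and>
     (\<exists>\<epsilon> \<epsilon>'. wpre w (length \<mu> + length \<epsilon>) = \<mu> @ \<epsilon> \<and> \<mu> @ \<epsilon> = \<mu>' @ \<epsilon>' \<and>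
        \<eta> @ g \<epsilon> = \<eta>' @ g' \<epsilon>' \<and> restr g \<epsilon> = restr g' \<epsilon>')"
  by (simp add: gerel_def)

lemma gerel_sym: "gerel p q \<Longrightarrow> gerel q p"
  unfolding gerel_def by (auto split: prod.splits) (metis length_append)

lemma gerel_refl: "w \<in> cyl \<mu> \<Longrightarrow> gerel ((\<eta>, g, \<mu>), w) ((\<eta>, g, \<mu>), w)"
  by (auto simp: gerel_iff mem_cyl_iff intro!: exI[of _ "[]"])

lemma gerel_iff_eventually:
  assumes "tree_endo g" "tree_endo g'"
  shows "gerel ((\<eta>, g, \<mu>), w) ((\<eta>', g', \<mu>'), w') \<longleftrightarrow> w = w' \<and>
     (\<forall>\<^sub>F L in sequentially. \<exists>\<epsilon> \<epsilon>'. \<mu> @ \<epsilon> = wpre w L \<and> \<mu>' @ \<epsilon>' = wpre w L \<and>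
        \<eta> @ g \<epsilon> = \<eta>' @ g' \<epsilon>' \<and> restr g \<epsilon> = restr g' \<epsilon>')"
    (is "_ \<longleftrightarrow> _ \<and> eventually ?agree _")
proof
  assume "gerel ((\<eta>, g, \<mu>), w) ((\<eta>', g', \<mu>'), w')"
  then obtain \<epsilon> \<epsilon>' where "w = w'" and \<epsilon>: "wpre w (length \<mu> + length \<epsilon>) = \<mu> @ \<epsilon>"
    "\<mu> @ \<epsilon> = \<mu>' @ \<epsilon>'" "\<eta> @ g \<epsilon> = \<eta>' @ g' \<epsilon>'" "restr g \<epsilon> = restr g' \<epsilon>'"
    by (auto simp: gerel_iff)
  have "?agree L" if "length \<mu> + length \<epsilon> \<le> L" for L
  proof -
    define L0 where "L0 = length \<mu> + length \<epsilon>"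
    define \<delta> where "\<delta> = wpre (shiftw L0 w) (L - L0)"
    have "wpre w L = \<mu> @ \<epsilon> @ \<delta>"
      using wpre_add[of w L0 "L - L0"] that \<epsilon>(1) by (simp add: L0_def \<delta>_def)
    moreover have "\<eta> @ g (\<epsilon> @ \<delta>) = \<eta>' @ g' (\<epsilon>' @ \<delta>)"
      using \<epsilon>(3,4) by (simp add: tree_endo_append[OF assms(1)] tree_endo_append[OF assms(2)])
    moreover have "restr g (\<epsilon> @ \<delta>) = restr g' (\<epsilon>' @ \<delta>)"
      using \<epsilon>(4) by (metis restr_restr)
    ultimately show ?thesis using \<epsilon>(2) by (metis append_assoc)
  qed
  thus "w = w' \<and> eventually ?agree sequentially"
    using \<open>w = w'\<close> by (auto simp: eventually_sequentially)
next
  assume "w = w' \<and> eventually ?agree sequentially"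
  then obtain L \<epsilon> \<epsilon>' where "w = w'" "\<mu> @ \<epsilon> = wpre w L" "\<mu>' @ \<epsilon>' = wpre w L"
    "\<eta> @ g \<epsilon> = \<eta>' @ g' \<epsilon>'" "restr g \<epsilon> = restr g' \<epsilon>'"
    by (auto simp: eventually_sequentially)
  moreover from this have "length \<mu> + length \<epsilon> = L" by (metis length_append length_wpre)
  ultimately show "gerel ((\<eta>, g, \<mu>), w) ((\<eta>', g', \<mu>'), w')"
    unfolding gerel_iff by metis
qed

lemma gerel_trans:
  assumes "gerel ((\<eta>1, g1, \<mu>1), w1) ((\<eta>2, g2, \<mu>2), w2)" "gerel ((\<eta>2, g2, \<mu>2), w2) ((\<eta>3, g3, \<mu>3), w3)"
    and "tree_endo g1" "tree_endo g2" "tree_endo g3"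
  shows "gerel ((\<eta>1, g1, \<mu>1), w1) ((\<eta>3, g3, \<mu>3), w3)"
proof -
  have "w1 = w2" "w2 = w3"
    using assms by (simp_all add: gerel_iff)
  moreover have "\<forall>\<^sub>F L in sequentially.
      (\<exists>\<epsilon> \<epsilon>'. \<mu>1 @ \<epsilon> = wpre w1 L \<and> \<mu>2 @ \<epsilon>' = wpre w1 L \<and> \<eta>1 @ g1 \<epsilon> = \<eta>2 @ g2 \<epsilon>' \<and> restr g1 \<epsilon> = restr g2 \<epsilon>') \<and>
      (\<exists>\<epsilon> \<epsilon>'. \<mu>2 @ \<epsilon> = wpre w1 L \<and> \<mu>3 @ \<epsilon>' = wpre w1 L \<and> \<eta>2 @ g2 \<epsilon> = \<eta>3 @ g3 \<epsilon>' \<and> restr g2 \<epsilon> = restr g3 \<epsilon>')"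
    using assms calculation by (intro eventually_conj) (simp_all add: gerel_iff_eventually)
  hence "\<forall>\<^sub>F L in sequentially. \<exists>\<epsilon> \<epsilon>'. \<mu>1 @ \<epsilon> = wpre w1 L \<and> \<mu>3 @ \<epsilon>' = wpre w1 L \<and>
      \<eta>1 @ g1 \<epsilon> = \<eta>3 @ g3 \<epsilon>' \<and> restr g1 \<epsilon> = restr g3 \<epsilon>'"
    by (rule eventually_mono) (metis append_eq_append_conv)
  ultimately show ?thesis using assms(3,5) by (simp add: gerel_iff_eventually)
qed

context primitive_field
begin

lemma GDom_iff [simp]: "((\<eta>, g, \<mu>), w) \<in> GDom n \<alpha> \<longleftrightarrow> g \<in> Gn n \<alpha> \<and> w \<in> cyl \<mu>"
  by (simp add: GDom_def)

lemma germ_eq_iff: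
  assumes "((\<eta>, g, \<mu>), w) \<in> GDom n \<alpha>" "((\<eta>', g', \<mu>'), w') \<in> GDom n \<alpha>"
  shows "germ n \<alpha> (\<eta>, g, \<mu>) w = germ n \<alpha> (\<eta>', g', \<mu>') w' \<longleftrightarrow>
    gerel ((\<eta>, g, \<mu>), w) ((\<eta>', g', \<mu>'), w')"
proof
  assume "germ n \<alpha> (\<eta>, g, \<mu>) w = germ n \<alpha> (\<eta>', g', \<mu>') w'"
  moreover have "((\<eta>', g', \<mu>'), w') \<in> germ n \<alpha> (\<eta>', g', \<mu>') w'"
    using assms(2) by (simp add: germ_def gerel_refl)
  ultimately show "gerel ((\<eta>, g, \<mu>), w) ((\<eta>', g', \<mu>'), w')"
    unfolding germ_def by blast
next
  assume r: "gerel ((\<eta>, g, \<mu>), w) ((\<eta>', g', \<mu>'), w')"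
  have "gerel ((\<eta>, g, \<mu>), w) q \<longleftrightarrow> gerel ((\<eta>', g', \<mu>'), w') q" if "q \<in> GDom n \<alpha>" for q
  proof -
    obtain a b c d where q: "q = ((a, b, c), d)" by (metis prod.collapse)
    have te: "tree_endo g" "tree_endo g'" "tree_endo b"
      using assms that q by (auto intro: Gn_tree_endo)
    show ?thesis unfolding q
      using gerel_trans[OF gerel_sym[OF r] _ te(2,1,3)] gerel_trans[OF r _ te] by blast
  qed
  thus "germ n \<alpha> (\<eta>, g, \<mu>) w = germ n \<alpha> (\<eta>', g', \<mu>') w'"
    by (auto simp: germ_def)
qed

lemma gsrc_germ:
  assumes "((\<eta>, g, \<mu>), w) \<in> GDom n \<alpha>"
  shows "gsrc (germ n \<alpha> (\<eta>, g, \<mu>) w) = w"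
proof -
  have "((\<eta>, g, \<mu>), w) \<in> germ n \<alpha> (\<eta>, g, \<mu>) w"
    using assms by (simp add: germ_def gerel_refl)
  moreover have "snd p = w" if "p \<in> germ n \<alpha> (\<eta>, g, \<mu>) w" for p
  proof -
    obtain a b c d where "p = ((a, b, c), d)" by (metis prod.collapse)
    thus ?thesis using that by (simp add: germ_def gerel_iff)
  qed
  ultimately show ?thesis unfolding gsrc_def by (metis someI)
qed

lemma germ_in_Grpd: "(s, w) \<in> GDom n \<alpha> \<Longrightarrow> germ n \<alpha> s w \<in> Grpd n \<alpha>"
  unfolding Grpd_def by blast

lemma G_open_bis:
  assumes "g \<in> Gn n \<alpha>" "cantor_open V" "V \<subseteq> cyl \<mu>"
  shows "G_open n \<alpha> (bis n \<alpha> (\<eta>, g, \<mu>) V)"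
  unfolding G_open_def
proof (intro conjI ballI)
  show "bis n \<alpha> (\<eta>, g, \<mu>) V \<subseteq> Grpd n \<alpha>"
    using assms by (auto simp: bis_def intro!: germ_in_Grpd)
  fix x assume "x \<in> bis n \<alpha> (\<eta>, g, \<mu>) V"
  with assms show "\<exists>\<eta>' g' \<mu>' V'. g' \<in> Gn n \<alpha> \<and> cantor_open V' \<and> V' \<subseteq> cyl \<mu>' \<and>
      x \<in> bis n \<alpha> (\<eta>', g', \<mu>') V' \<and> bis n \<alpha> (\<eta>', g', \<mu>') V' \<subseteq> bis n \<alpha> (\<eta>, g, \<mu>) V"
    by (intro exI[of _ \<eta>] exI[of _ g] exI[of _ \<mu>] exI[of _ V]) simp
qed

lemma G_openE:
  assumes "G_open n \<alpha> B" "x \<in> B"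
  obtains \<eta> g \<mu> V w where "g \<in> Gn n \<alpha>" "cantor_open V" "V \<subseteq> cyl \<mu>" "w \<in> V"
    "x = germ n \<alpha> (\<eta>, g, \<mu>) w" "bis n \<alpha> (\<eta>, g, \<mu>) V \<subseteq> B"
proof -
  obtain \<eta> g \<mu> V where *: "g \<in> Gn n \<alpha>" "cantor_open V" "V \<subseteq> cyl \<mu>"
    "x \<in> bis n \<alpha> (\<eta>, g, \<mu>) V" "bis n \<alpha> (\<eta>, g, \<mu>) V \<subseteq> B"
    using assms unfolding G_open_def by meson
  then obtain w where "w \<in> V" "x = germ n \<alpha> (\<eta>, g, \<mu>) w"
    unfolding bis_def by blast
  with * that show ?thesis by blast
qed

section \<open>Germs near the unit at 1^\<infinity>\<close>

definition iota_germ :: "'k \<Rightarrow> germ" where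
  "iota_germ b = germ n \<alpha> ([], iota n \<alpha> b, []) (\<lambda>_. True)"

definition flip_germ :: "nat \<Rightarrow> bool \<Rightarrow> iword \<Rightarrow> germ" where
  "flip_germ k s v =
     germ n \<alpha> (ones k @ [False], flip_if s, ones k @ [False]) (conc (ones k @ [False]) v)"

lemma iota_germ_GDom: "(([], iota n \<alpha> b, []), \<lambda>_. True) \<in> GDom n \<alpha>"
  by (simp add: Gn.G_iota mem_cyl_iff)

lemma flip_germ_GDom:
  "((ones k @ [False], flip_if s, ones k @ [False]), conc (ones k @ [False]) v) \<in> GDom n \<alpha>"
  by (simp add: flip_if_Gn conc_in_cyl)

lemma iota_germ_zero: "iota_germ 0 = z_e n \<alpha>"
  by (simp add: iota_germ_def z_e_def iota_zero)

lemma gsrc_iota_germ: "gsrc (iota_germ b) = (\<lambda>_. True)"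
  unfolding iota_germ_def by (rule gsrc_germ[OF iota_germ_GDom])

lemma gsrc_flip_germ: "gsrc (flip_germ k s v) = conc (ones k @ [False]) v"
  unfolding flip_germ_def by (rule gsrc_germ[OF flip_germ_GDom])

lemma flip_germ_in_Grpd: "flip_germ k s v \<in> Grpd n \<alpha>"
  unfolding flip_germ_def by (rule germ_in_Grpd[OF flip_germ_GDom])

lemma G_open_range_flip_germ: "G_open n \<alpha> (range (flip_germ k s))"
proof -
  let ?u = "ones k @ [False]"
  have "range (flip_germ k s) = bis n \<alpha> (?u, flip_if s, ?u) (cyl ?u)"
  proof
    show "range (flip_germ k s) \<subseteq> bis n \<alpha> (?u, flip_if s, ?u) (cyl ?u)"
      unfolding bis_def flip_germ_def using conc_in_cyl by blast
    show "bis n \<alpha> (?u, flip_if s, ?u) (cyl ?u) \<subseteq> range (flip_germ k s)"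
    proof
      fix x assume "x \<in> bis n \<alpha> (?u, flip_if s, ?u) (cyl ?u)"
      then obtain w where "w \<in> cyl ?u" "x = germ n \<alpha> (?u, flip_if s, ?u) w"
        by (auto simp: bis_def)
      moreover have "conc ?u (shiftw (length ?u) w) = w"
        using conc_shiftw \<open>w \<in> cyl ?u\<close> unfolding mem_cyl_iff by blast
      ultimately have "x = flip_germ k s (shiftw (length ?u) w)"
        unfolding flip_germ_def by simp
      thus "x \<in> range (flip_germ k s)" by simp
    qed
  qed
  thus ?thesis by (simp add: G_open_bis flip_if_Gn cantor_open_cyl)
qed

lemma flip_germ_inj:
  assumes "flip_germ k s v = flip_germ k t v" shows "s = t"
proof -
  obtain \<epsilon> where "flip_if s \<epsilon> = flip_if t \<epsilon>" "restr (flip_if s) \<epsilon> = restr (flip_if t) \<epsilon>"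
    using assms unfolding flip_germ_def germ_eq_iff[OF flip_germ_GDom flip_germ_GDom]
    by (auto simp: gerel_iff)
  thus ?thesis by (rule flip_if_eq_restr_eq_imp_eq)
qed

lemma trace_bit_shift: "trace_bit i (\<alpha> ^ j * b) = trace_bit (i + j) b"
  by (simp add: trace_bit_def power_add mult.assoc)

lemma iota_eq_imp_trace_bit_eq:
  assumes "iota n \<alpha> b = iota n \<alpha> c" shows "trace_bit i b = trace_bit i c"
proof -
  have "iota n \<alpha> b (ones i @ [False, True]) = iota n \<alpha> c (ones i @ [False, True])"
    using assms by simp
  thus ?thesis by (simp add: iota_ones_False)
qed

lemma germ_eq_iota_germ_iff:
  assumes "g \<in> Gn n \<alpha>" "(\<lambda>_. True) \<in> cyl \<mu>"
  shows "germ n \<alpha> (\<eta>, g, \<mu>) (\<lambda>_. True) = iota_germ b \<longleftrightarrow>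
    (\<exists>L \<epsilon>. \<mu> @ \<epsilon> = ones L \<and> \<eta> @ g \<epsilon> = ones L \<and> restr g \<epsilon> = iota n \<alpha> (\<alpha> ^ L * b))"
    (is "_ \<longleftrightarrow> (\<exists>L \<epsilon>. ?P L \<epsilon>)")
proof -
  have GD: "((\<eta>, g, \<mu>), \<lambda>_. True) \<in> GDom n \<alpha>" using assms by simp
  have "germ n \<alpha> (\<eta>, g, \<mu>) (\<lambda>_. True) = iota_germ b \<longleftrightarrow>
    (\<exists>\<epsilon>. ?P (length \<mu> + length \<epsilon>) \<epsilon>)"
    unfolding iota_germ_def germ_eq_iff[OF GD iota_germ_GDom]
    by (simp add: gerel_iff) (metis iota_fixes_ones restr_iota_ones)
  also have "\<dots> \<longleftrightarrow> (\<exists>L \<epsilon>. ?P L \<epsilon>)"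
    by (metis length_append length_replicate)
  finally show ?thesis .
qed

lemma iota_germ_eq_imp_eventually_trace_bit_eq:
  assumes "iota_germ b = iota_germ c"
  shows "\<forall>\<^sub>F k in sequentially. trace_bit k b = trace_bit k c"
proof -
  have "\<exists>L \<epsilon>. [] @ \<epsilon> = ones L \<and> [] @ iota n \<alpha> b \<epsilon> = ones L \<and>
      restr (iota n \<alpha> b) \<epsilon> = iota n \<alpha> (\<alpha> ^ L * c)"
    using assms germ_eq_iota_germ_iff[of "iota n \<alpha> b" "[]" "[]" c]
    by (simp add: iota_germ_def Gn.G_iota mem_cyl_iff)
  then obtain L where L: "iota n \<alpha> (\<alpha> ^ L * b) = iota n \<alpha> (\<alpha> ^ L * c)"
    by (auto simp: restr_iota_ones)
  have "trace_bit k b = trace_bit k c" if "L \<le> k" for k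
    using iota_eq_imp_trace_bit_eq[OF L, of "k - L"] that by (simp add: trace_bit_shift)
  thus ?thesis by (auto simp: eventually_sequentially)
qed

lemma flip_germ_eq_germ:
  assumes g: "g \<in> Gn n \<alpha>" and \<epsilon>: "\<mu> @ \<epsilon> = ones L" "\<eta> @ g \<epsilon> = ones L" "restr g \<epsilon> = iota n \<alpha> \<gamma>"
    and "L \<le> k"
  shows "flip_germ k (trace_bit (k - L) \<gamma>) v = germ n \<alpha> (\<eta>, g, \<mu>) (conc (ones k @ [False]) v)"
proof -
  let ?u = "ones k @ [False]" and ?p = "conc (ones k @ [False]) v"
  define \<delta> where "\<delta> = ones (k - L) @ [False]"
  have "\<mu> @ \<epsilon> @ \<delta> = ones L @ \<delta>" using \<epsilon>(1) by (metis append_assoc)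
  hence u: "?u = \<mu> @ \<epsilon> @ \<delta>"
    using \<open>L \<le> k\<close> by (simp add: \<delta>_def replicate_add[symmetric])
  have "\<eta> @ g (\<epsilon> @ \<delta>) = ones L @ iota n \<alpha> \<gamma> \<delta>"
    using \<epsilon>(2,3) by (simp add: tree_endo_append[OF Gn_tree_endo[OF g]])
  also have "\<dots> = ?u"
    using \<open>L \<le> k\<close> by (simp add: \<delta>_def iota_ones_False replicate_add[symmetric])
  finally have range: "\<eta> @ g (\<epsilon> @ \<delta>) = ?u" .
  have "restr g (\<epsilon> @ \<delta>) = restr (iota n \<alpha> \<gamma>) \<delta>"
    by (simp add: restr_restr[symmetric] \<epsilon>(3))
  hence restr: "restr g (\<epsilon> @ \<delta>) = flip_if (trace_bit (k - L) \<gamma>)"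
    by (simp add: \<delta>_def restr_iota_ones_False)
  have "?p \<in> cyl \<mu>"
    using conc_in_cyl[of ?u v] cyl_append_subset[of \<mu> "\<epsilon> @ \<delta>"] u by auto
  hence "((\<eta>, g, \<mu>), ?p) \<in> GDom n \<alpha>" using g by simp
  moreover have "gerel ((?u, flip_if (trace_bit (k - L) \<gamma>), ?u), ?p) ((\<eta>, g, \<mu>), ?p)"
    unfolding gerel_iff using u range restr wpre_conc[of ?u v]
    by (intro conjI exI[of _ "[]"] exI[of _ "\<epsilon> @ \<delta>"]) simp_all
  ultimately show ?thesis
    unfolding flip_germ_def by (simp add: germ_eq_iff[OF flip_germ_GDom])
qed

lemma open_eventually_flip_germ:
  assumes "G_open n \<alpha> B" "iota_germ b \<in> B"
  shows "\<forall>\<^sub>F k in sequentially. \<forall>v. flip_germ k (trace_bit k b) v \<in> B"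
proof -
  obtain \<eta> g \<mu> V w where o: "g \<in> Gn n \<alpha>" "cantor_open V" "V \<subseteq> cyl \<mu>" "w \<in> V"
    and y: "iota_germ b = germ n \<alpha> (\<eta>, g, \<mu>) w" and VB: "bis n \<alpha> (\<eta>, g, \<mu>) V \<subseteq> B"
    using G_openE[OF assms] by metis
  have "gsrc (germ n \<alpha> (\<eta>, g, \<mu>) w) = w"
    using o by (intro gsrc_germ) auto
  hence "w = (\<lambda>_. True)" using gsrc_iota_germ y by metis
  with o y obtain L \<epsilon> where \<epsilon>: "\<mu> @ \<epsilon> = ones L" "\<eta> @ g \<epsilon> = ones L"
    "restr g \<epsilon> = iota n \<alpha> (\<alpha> ^ L * b)"
    using germ_eq_iota_germ_iff[of g \<mu> \<eta> b] by auto
  obtain M where M: "cyl (ones M) \<subseteq> V"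
    using o(2,4) \<open>w = _\<close> unfolding cantor_open_def by (metis wpre_const_True)
  have "flip_germ k (trace_bit k b) v \<in> B" if k: "max L M \<le> k" for k v
  proof -
    have "flip_germ k (trace_bit k b) v = germ n \<alpha> (\<eta>, g, \<mu>) (conc (ones k @ [False]) v)"
      using flip_germ_eq_germ[OF o(1) \<epsilon>, of k v] k by (simp add: trace_bit_shift)
    moreover have "ones k @ [False] = ones M @ (ones (k - M) @ [False])"
      using k by (simp add: replicate_add[symmetric])
    hence "conc (ones k @ [False]) v \<in> V"
      using conc_in_cyl[of "ones k @ [False]" v] cyl_append_subset[of "ones M"] M by auto
    ultimately show ?thesis using VB by (auto simp: bis_def)
  qed
  thus ?thesis by (intro eventually_sequentiallyI[of "max L M"]) blast
qed

lemma flip_germ_eq_germ_imp_fixes_ones: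
  assumes g: "g \<in> Gn n \<alpha>" and "m \<le> k"
    and eq: "flip_germ k s v = germ n \<alpha> (\<eta>, g, ones m) (conc (ones k @ [False]) v)"
  shows "\<eta> = ones m \<and> g (ones (k - m)) = ones (k - m)"
proof -
  let ?u = "ones k @ [False]" and ?p = "conc (ones k @ [False]) v"
  have u: "?u = ones m @ ones (k - m) @ [False]"
    using \<open>m \<le> k\<close> by (simp add: replicate_add[symmetric])
  have "?p \<in> cyl (ones m)"
    using conc_in_cyl[of ?u v] cyl_append_subset[of "ones m"] u by auto
  with g have GD: "((\<eta>, g, ones m), ?p) \<in> GDom n \<alpha>" by simp
  obtain \<epsilon> \<epsilon>' where \<epsilon>: "?u @ \<epsilon> = ones m @ \<epsilon>'" "?u @ flip_if s \<epsilon> = \<eta> @ g \<epsilon>'"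
    using eq unfolding flip_germ_def germ_eq_iff[OF flip_germ_GDom GD] gerel_iff by blast
  hence \<epsilon>': "\<epsilon>' = ones (k - m) @ False # \<epsilon>" using u by simp
  have "length \<eta> = m"
    using arg_cong[OF \<epsilon>(2), of length] tree_endo_length[OF Gn_tree_endo[OF g], of \<epsilon>'] \<epsilon>' \<open>m \<le> k\<close>
    by simp
  with \<epsilon>(2) u have "\<eta> = ones m" and g\<epsilon>': "g \<epsilon>' = ones (k - m) @ False # flip_if s \<epsilon>"
    by (simp_all add: append_eq_append_conv2 append_eq_conv_conj)
  moreover have "g (ones (k - m)) = take (k - m) (g \<epsilon>')"
    using Gn_tree_endo[OF g] \<epsilon>' unfolding tree_endo_def by (metis length_replicate)
  ultimately show ?thesis using g\<epsilon>' by simp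
qed

lemma eventually_flip_germ_eq_germ_imp_iota_germ:
  assumes g: "g \<in> Gn n \<alpha>"
  shows "\<forall>\<^sub>F k in sequentially. \<forall>s v.
    flip_germ k s v = germ n \<alpha> (\<eta>, g, ones m) (conc (ones k @ [False]) v) \<longrightarrow>
    (\<exists>b. germ n \<alpha> (\<eta>, g, ones m) (\<lambda>_. True) = iota_germ b \<and> s = trace_bit k b)"
proof -
  obtain J where J: "\<forall>k\<ge>J. g (ones k) = ones k \<longrightarrow>
      (\<exists>j \<gamma>. j \<le> k \<and> g (ones j) = ones j \<and> restr g (ones j) = iota n \<alpha> \<gamma>)"
    using Gn_fixing_ones_restr_iota[OF g] by blast
  have "\<exists>b. germ n \<alpha> (\<eta>, g, ones m) (\<lambda>_. True) = iota_germ b \<and> s = trace_bit k b"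
    if k: "m + J \<le> k" and eq: "flip_germ k s v = germ n \<alpha> (\<eta>, g, ones m) (conc (ones k @ [False]) v)"
    for k s v
  proof -
    have \<eta>: "\<eta> = ones m" and "g (ones (k - m)) = ones (k - m)"
      using flip_germ_eq_germ_imp_fixes_ones[OF g _ eq] k by auto
    moreover have "J \<le> k - m" using k by simp
    ultimately obtain j \<gamma> where j: "j \<le> k - m" "g (ones j) = ones j" "restr g (ones j) = iota n \<alpha> \<gamma>"
      using J by blast
    define b where "b = inverse (\<alpha> ^ (m + j)) * \<gamma>"
    have \<gamma>: "\<gamma> = \<alpha> ^ (m + j) * b" using alpha_nonzero by (simp add: b_def)
    have \<epsilon>: "ones m @ ones j = ones (m + j)" "\<eta> @ g (ones j) = ones (m + j)"
      using j(2) by (simp_all add: \<eta> replicate_add)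
    have "germ n \<alpha> (\<eta>, g, ones m) (\<lambda>_. True) = iota_germ b"
      using \<epsilon> j(3) g \<gamma> by (subst germ_eq_iota_germ_iff) (auto simp: mem_cyl_iff)
    moreover have "flip_germ k (trace_bit (k - (m + j)) \<gamma>) v = flip_germ k s v"
      using flip_germ_eq_germ[OF g \<epsilon> j(3), of k v] j(1) k eq by simp
    hence "flip_germ k (trace_bit k b) v = flip_germ k s v"
      using j(1) k by (simp add: \<gamma> trace_bit_shift)
    hence "s = trace_bit k b" by (metis flip_germ_inj)
    ultimately show ?thesis by blast
  qed
  thus ?thesis by (intro eventually_sequentiallyI[of "m + J"]) blast
qed

lemma flip_germ_notin_bis_cyl:
  assumes "g \<in> Gn n \<alpha>" "V \<subseteq> cyl \<mu>" "\<not> w i" "Suc i \<le> k"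
  shows "flip_germ k s v \<notin> bis n \<alpha> (\<eta>, g, \<mu>) (V \<inter> cyl (wpre w (Suc i)))"
proof
  assume "flip_germ k s v \<in> bis n \<alpha> (\<eta>, g, \<mu>) (V \<inter> cyl (wpre w (Suc i)))"
  then obtain w' where w': "w' \<in> V" "w' \<in> cyl (wpre w (Suc i))"
    "flip_germ k s v = germ n \<alpha> (\<eta>, g, \<mu>) w'"
    by (auto simp: bis_def)
  hence "w' = conc (ones k @ [False]) v"
    using assms(1,2) gsrc_germ[of \<eta> g \<mu> w'] gsrc_flip_germ[of k s v] by auto
  hence "w' i" using assms(4) by (simp add: conc_def nth_append)
  moreover have "wpre w' (Suc i) = wpre w (Suc i)" using w'(2) by (simp add: mem_cyl_iff)
  hence "w' i = w i" using wpre_nth[of i "Suc i" w'] wpre_nth[of i "Suc i" w] by simp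
  ultimately show False using assms(3) by simp
qed

lemma eventually_flip_germ_in_bis_imp_iota_germ:
  assumes g: "g \<in> Gn n \<alpha>" and V: "V \<subseteq> cyl (ones m)"
  shows "\<forall>\<^sub>F k in sequentially. \<forall>s v. flip_germ k s v \<in> bis n \<alpha> (\<eta>, g, ones m) V \<longrightarrow>
    (\<exists>b. germ n \<alpha> (\<eta>, g, ones m) (\<lambda>_. True) = iota_germ b \<and> s = trace_bit k b)"
  using eventually_flip_germ_eq_germ_imp_iota_germ[OF g, of \<eta> m]
proof (rule eventually_mono, intro allI impI)
  fix k s v
  assume imp: "\<forall>s v. flip_germ k s v = germ n \<alpha> (\<eta>, g, ones m) (conc (ones k @ [False]) v) \<longrightarrow>
      (\<exists>b. germ n \<alpha> (\<eta>, g, ones m) (\<lambda>_. True) = iota_germ b \<and> s = trace_bit k b)"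
    and "flip_germ k s v \<in> bis n \<alpha> (\<eta>, g, ones m) V"
  then obtain w where w: "w \<in> V" "flip_germ k s v = germ n \<alpha> (\<eta>, g, ones m) w"
    by (auto simp: bis_def)
  hence "w = conc (ones k @ [False]) v"
    using g V gsrc_germ[of \<eta> g "ones m" w] gsrc_flip_germ[of k s v] by auto
  with w imp show "\<exists>b. germ n \<alpha> (\<eta>, g, ones m) (\<lambda>_. True) = iota_germ b \<and> s = trace_bit k b"
    by blast
qed

lemma open_nbhd_eventually_flip_germ:
  assumes "G_open n \<alpha> B" "y \<in> B"
  obtains U where "G_open n \<alpha> U" "y \<in> U"
    "\<forall>\<^sub>F k in sequentially. \<forall>s v. flip_germ k s v \<in> U \<longrightarrow> (\<exists>b. iota_germ b \<in> B \<and> s = trace_bit k b)"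
proof -
  obtain \<eta> g \<mu> V w where o: "g \<in> Gn n \<alpha>" "cantor_open V" "V \<subseteq> cyl \<mu>" "w \<in> V"
    and y: "y = germ n \<alpha> (\<eta>, g, \<mu>) w" and VB: "bis n \<alpha> (\<eta>, g, \<mu>) V \<subseteq> B"
    using G_openE[OF assms] by metis
  show ?thesis
  proof (cases "w = (\<lambda>_. True)")
    case True
    define m where "m = length \<mu>"
    have \<mu>: "\<mu> = ones m" using o True by (auto simp: mem_cyl_iff m_def)
    have yB: "germ n \<alpha> (\<eta>, g, ones m) (\<lambda>_. True) \<in> B" using assms(2) y True \<mu> by simp
    have "\<forall>\<^sub>F k in sequentially. \<forall>s v. flip_germ k s v \<in> bis n \<alpha> (\<eta>, g, \<mu>) V \<longrightarrow>
        (\<exists>b. iota_germ b \<in> B \<and> s = trace_bit k b)"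
      using eventually_flip_germ_in_bis_imp_iota_germ[OF o(1) o(3)[unfolded \<mu>], of \<eta>] unfolding \<mu>
      by (rule eventually_mono) (metis yB)
    moreover have "y \<in> bis n \<alpha> (\<eta>, g, \<mu>) V" using o y by (auto simp: bis_def)
    ultimately show ?thesis using o VB by (intro that[OF G_open_bis]) auto
  next
    case False
    then obtain i where "\<not> w i" by auto
    let ?V = "V \<inter> cyl (wpre w (Suc i))"
    have "\<forall>\<^sub>F k in sequentially. \<forall>s v. flip_germ k s v \<in> bis n \<alpha> (\<eta>, g, \<mu>) ?V \<longrightarrow>
        (\<exists>b. iota_germ b \<in> B \<and> s = trace_bit k b)"
      using flip_germ_notin_bis_cyl[of g V \<mu> w i, OF o(1,3) \<open>\<not> w i\<close>]
      by (intro eventually_sequentiallyI[of "Suc i"]) blast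
    moreover have "y \<in> bis n \<alpha> (\<eta>, g, \<mu>) ?V"
      using o y by (auto simp: bis_def mem_cyl_iff)
    moreover have "G_open n \<alpha> (bis n \<alpha> (\<eta>, g, \<mu>) ?V)"
      using o by (intro G_open_bis cantor_open_Int cantor_open_cyl) auto
    ultimately show ?thesis using that by blast
  qed
qed

lemma compact_open_eventually_flip_germ_iff:
  assumes "G_open n \<alpha> B" "G_compact n \<alpha> B"
  shows "\<forall>\<^sub>F k in sequentially. \<forall>s v.
    flip_germ k s v \<in> B \<longleftrightarrow> (\<exists>b. iota_germ b \<in> B \<and> s = trace_bit k b)"
proof -
  have iota_imp_flip: "\<forall>\<^sub>F k in sequentially. \<forall>b. iota_germ b \<in> B \<longrightarrow> (\<forall>v. flip_germ k (trace_bit k b) v \<in> B)"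
  proof (rule eventually_all_finite)
    fix b show "\<forall>\<^sub>F k in sequentially. iota_germ b \<in> B \<longrightarrow> (\<forall>v. flip_germ k (trace_bit k b) v \<in> B)"
      using open_eventually_flip_germ[OF assms(1)] by (cases "iota_germ b \<in> B") simp_all
  qed
  define P where "P U k \<longleftrightarrow> (\<forall>s v. flip_germ k s v \<in> U \<longrightarrow> (\<exists>b. iota_germ b \<in> B \<and> s = trace_bit k b))"
    for U k
  define \<U> where "\<U> = {U. G_open n \<alpha> U \<and> eventually (P U) sequentially}"
  have "\<forall>U\<in>\<U>. G_open n \<alpha> U" unfolding \<U>_def by blast
  moreover have "B \<subseteq> \<Union>\<U>"
  proof
    fix y assume "y \<in> B"
    obtain U where U: "G_open n \<alpha> U" "y \<in> U"
      "\<forall>\<^sub>F k in sequentially. \<forall>s v. flip_germ k s v \<in> U \<longrightarrow> (\<exists>b. iota_germ b \<in> B \<and> s = trace_bit k b)"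
      by (rule open_nbhd_eventually_flip_germ[OF assms(1) \<open>y \<in> B\<close>])
    hence "U \<in> \<U>" unfolding \<U>_def P_def by simp
    thus "y \<in> \<Union>\<U>" using U(2) by blast
  qed
  ultimately obtain \<V> where \<V>: "\<V> \<subseteq> \<U>" "finite \<V>" "B \<subseteq> \<Union>\<V>"
    using assms(2)[unfolded G_compact_def, THEN conjunct2, rule_format, of \<U>] by blast
  hence "\<forall>\<^sub>F k in sequentially. \<forall>U\<in>\<V>. P U k"
    by (intro eventually_ball_finite) (auto simp: \<U>_def)
  hence flip_imp_iota: "\<forall>\<^sub>F k in sequentially. \<forall>s v.
      flip_germ k s v \<in> B \<longrightarrow> (\<exists>b. iota_germ b \<in> B \<and> s = trace_bit k b)"
  proof (rule eventually_mono, intro allI impI)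
    fix k s v assume P: "\<forall>U\<in>\<V>. P U k" and "flip_germ k s v \<in> B"
    then obtain U where "U \<in> \<V>" "flip_germ k s v \<in> U" using \<V>(3) by blast
    thus "\<exists>b. iota_germ b \<in> B \<and> s = trace_bit k b" using P unfolding P_def by blast
  qed
  from iota_imp_flip flip_imp_iota show ?thesis by eventually_elim auto
qed

section \<open>Steinberg functions near z_e\<close>

lemma bisection_iota_germ_eq:
  assumes "G_bisection n \<alpha> B" "iota_germ b \<in> B" "iota_germ c \<in> B"
  shows "iota_germ b = iota_germ c"
  using assms gsrc_iota_germ unfolding G_bisection_def by (metis inj_onD)

lemma compact_open_bisection_flip_germ_iff:
  assumes B: "compact_open_bisection n \<alpha> B" and b: "iota_germ b \<in> B"
  shows "\<forall>\<^sub>F k in sequentially. \<forall>s v. flip_germ k s v \<in> B \<longleftrightarrow> s = trace_bit k b"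
proof -
  have "\<forall>\<^sub>F k in sequentially. \<forall>c. iota_germ c \<in> B \<longrightarrow> trace_bit k c = trace_bit k b"
  proof (rule eventually_all_finite)
    fix c
    show "\<forall>\<^sub>F k in sequentially. iota_germ c \<in> B \<longrightarrow> trace_bit k c = trace_bit k b"
    proof (cases "iota_germ c \<in> B")
      case True
      with B b have "iota_germ c = iota_germ b"
        unfolding compact_open_bisection_def by (metis bisection_iota_germ_eq)
      thus ?thesis by (auto dest: iota_germ_eq_imp_eventually_trace_bit_eq)
    qed simp
  qed
  moreover have "\<forall>\<^sub>F k in sequentially. \<forall>s v.
      flip_germ k s v \<in> B \<longleftrightarrow> (\<exists>c. iota_germ c \<in> B \<and> s = trace_bit k c)"
    using B unfolding compact_open_bisection_def by (blast intro: compact_open_eventually_flip_germ_iff)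
  ultimately show ?thesis by eventually_elim (use b in blast)
qed

lemma compact_open_eventually_flip_germ_notin:
  assumes "compact_open_bisection n \<alpha> B" "\<forall>b. iota_germ b \<notin> B"
  shows "\<forall>\<^sub>F k in sequentially. \<forall>s v. flip_germ k s v \<notin> B"
  using compact_open_eventually_flip_germ_iff[of B] assms
  unfolding compact_open_bisection_def by auto

lemma steinberg_eventually_flip_germ:
  assumes "h \<in> steinberg n \<alpha>"
  obtains r :: nat and c :: "nat \<Rightarrow> complex" and b :: "nat \<Rightarrow> 'k"
  where "h (z_e n \<alpha>) = (\<Sum>i<r. if b i = 0 then c i else 0)"
    "\<forall>\<^sub>F k in sequentially. \<forall>s v. h (flip_germ k s v) = (\<Sum>i<r. if s = trace_bit k (b i) then c i else 0)"
proof -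
  obtain r and c :: "nat \<Rightarrow> complex" and B where B: "\<forall>i<r. compact_open_bisection n \<alpha> (B i)"
    and h: "h = (\<lambda>x. \<Sum>i<r. c i * (if x \<in> B i then 1 else 0))"
    using assms unfolding steinberg_def by blast
  define I where "I = {i. \<exists>b. iota_germ b \<in> B i}"
  define b where "b i = (if z_e n \<alpha> \<in> B i then 0 else SOME b. iota_germ b \<in> B i)" for i
  have b_in: "iota_germ (b i) \<in> B i" if "i \<in> I" for i
    using that someI_ex[of "\<lambda>b. iota_germ b \<in> B i"] by (auto simp: I_def b_def iota_germ_zero)
  have z_e_in: "z_e n \<alpha> \<in> B i \<longleftrightarrow> i \<in> I \<and> b i = 0" for i
  proof
    assume "z_e n \<alpha> \<in> B i"
    moreover from this have "iota_germ 0 \<in> B i" by (simp add: iota_germ_zero)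
    hence "i \<in> I" unfolding I_def by blast
    ultimately show "i \<in> I \<and> b i = 0" by (simp add: b_def)
  qed (use b_in[of i] in \<open>simp add: iota_germ_zero\<close>)
  have "\<forall>\<^sub>F k in sequentially. \<forall>i\<in>{..<r}. \<forall>s v. flip_germ k s v \<in> B i \<longleftrightarrow> i \<in> I \<and> s = trace_bit k (b i)"
  proof (rule eventually_ball_finite[OF finite_lessThan], rule ballI)
    fix i assume "i \<in> {..<r}"
    hence Bi: "compact_open_bisection n \<alpha> (B i)" using B by simp
    show "\<forall>\<^sub>F k in sequentially. \<forall>s v. flip_germ k s v \<in> B i \<longleftrightarrow> i \<in> I \<and> s = trace_bit k (b i)"
    proof (cases "i \<in> I")
      case True
      thus ?thesis using compact_open_bisection_flip_germ_iff[OF Bi b_in[OF True]] by simp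
    next
      case False
      thus ?thesis using compact_open_eventually_flip_germ_notin[OF Bi] by (simp add: I_def)
    qed
  qed
  hence "\<forall>\<^sub>F k in sequentially. \<forall>s v.
      h (flip_germ k s v) = (\<Sum>i<r. if s = trace_bit k (b i) then (if i \<in> I then c i else 0) else 0)"
    by eventually_elim (auto simp: h intro!: sum.cong)
  moreover have "h (z_e n \<alpha>) = (\<Sum>i<r. if b i = 0 then (if i \<in> I then c i else 0) else 0)"
    by (auto simp: h z_e_in intro!: sum.cong)
  ultimately show ?thesis using that[of b "\<lambda>i. if i \<in> I then c i else 0" r] by simp
qed

lemma sum_window_trace_bit:
  "(\<Sum>k\<in>{K..<K + alpha_ord}. if s = trace_bit k b then x else 0) =
   of_nat (card {k \<in> {K..<K + alpha_ord}. s = trace_bit k b}) * (x::'a::comm_ring_1)"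
  by (simp add: sum.inter_filter[symmetric])

lemma card_window_trace_bit:
  defines "A \<equiv> card {x::'k. trace n x \<noteq> 0}"
  shows "card {k \<in> {K..<K + alpha_ord}. s = trace_bit k b} =
    (if b = 0 then (if s then 0 else alpha_ord) else if s then A else alpha_ord - A)"
proof (cases "b = 0")
  case True
  hence "{k \<in> {K..<K + alpha_ord}. s = trace_bit k b} = (if s then {} else {K..<K + alpha_ord})"
    by auto
  thus ?thesis using True by simp
next
  case False
  thus ?thesis using card_trace_bit_window[of b K] card_not_trace_bit_window[of b K]
    by (cases s) (simp_all add: A_def)
qed

text \<open>Averaging over a full period of \<open>k \<mapsto> \<alpha>^k\<close> cancels every term with \<open>b i \<noteq> 0\<close>.\<close>
lemma trace_bit_window_identity:
  fixes r :: nat and b :: "nat \<Rightarrow> 'k" and c :: "nat \<Rightarrow> 'a::comm_ring_1"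
  defines "A \<equiv> card {x::'k. trace n x \<noteq> 0}"
    and "F k s \<equiv> \<Sum>i<r. if s = trace_bit k (b i) then c i else 0"
  shows "of_nat A * (\<Sum>k\<in>{K..<K + alpha_ord}. F k False)
       - of_nat (alpha_ord - A) * (\<Sum>k\<in>{K..<K + alpha_ord}. F k True)
       = of_nat A * of_nat alpha_ord * (\<Sum>i<r. if b i = 0 then c i else 0)"
proof -
  let ?W = "{K..<K + alpha_ord}"
  define N where "N s \<beta> = (of_nat (card {k \<in> ?W. s = trace_bit k \<beta>}) :: 'a)" for s \<beta>
  have per_term: "of_nat A * N False \<beta> - of_nat (alpha_ord - A) * N True \<beta>
      = (if \<beta> = 0 then of_nat A * of_nat alpha_ord else 0)" for \<beta>
    using card_window_trace_bit[of K False \<beta>] card_window_trace_bit[of K True \<beta>]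
    by (simp add: N_def A_def)
  have "(\<Sum>k\<in>?W. F k s) = (\<Sum>i<r. N s (b i) * c i)" for s
    unfolding F_def N_def by (subst sum.swap) (simp add: sum_window_trace_bit)
  hence "of_nat A * (\<Sum>k\<in>?W. F k False) - of_nat (alpha_ord - A) * (\<Sum>k\<in>?W. F k True)
      = (\<Sum>i<r. (of_nat A * N False (b i) - of_nat (alpha_ord - A) * N True (b i)) * c i)"
    by (simp add: sum_distrib_left sum_subtractf[symmetric] algebra_simps)
  also have "\<dots> = of_nat A * of_nat alpha_ord * (\<Sum>i<r. if b i = 0 then c i else 0)"
    unfolding per_term sum_distrib_left by (intro sum.cong) auto
  finally show ?thesis .
qed

lemma steinberg_norm_z_e_le:
  assumes "h \<in> steinberg n \<alpha>" and small: "\<forall>k s. \<exists>v. norm (h (flip_germ k s v)) \<le> \<epsilon>"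
  shows "real (card {x::'k. trace n x \<noteq> 0}) * norm (h (z_e n \<alpha>)) \<le> real alpha_ord * \<epsilon>"
proof -
  let ?A = "card {x::'k. trace n x \<noteq> 0}" and ?Q = "alpha_ord"
  obtain r :: nat and c :: "nat \<Rightarrow> complex" and b :: "nat \<Rightarrow> 'k"
    where z: "h (z_e n \<alpha>) = (\<Sum>i<r. if b i = 0 then c i else 0)"
    and ev: "\<forall>\<^sub>F k in sequentially. \<forall>s v. h (flip_germ k s v) = (\<Sum>i<r. if s = trace_bit k (b i) then c i else 0)"
    using steinberg_eventually_flip_germ[OF assms(1)] by blast
  obtain K where K: "\<And>k s v. K \<le> k \<Longrightarrow> h (flip_germ k s v) = (\<Sum>i<r. if s = trace_bit k (b i) then c i else 0)"
    using ev unfolding eventually_sequentially by blast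
  define v where "v k s = (SOME v. norm (h (flip_germ k s v)) \<le> \<epsilon>)" for k s
  have v: "norm (h (flip_germ k s (v k s))) \<le> \<epsilon>" for k s
    unfolding v_def using small someI_ex[of "\<lambda>v. norm (h (flip_germ k s v)) \<le> \<epsilon>"] by blast
  define T where "T s = (\<Sum>k\<in>{K..<K + ?Q}. h (flip_germ k s (v k s)))" for s
  have T_le: "norm (T s) \<le> ?Q * \<epsilon>" for s
  proof -
    have "norm (T s) \<le> (\<Sum>k\<in>{K..<K + ?Q}. norm (h (flip_germ k s (v k s))))"
      unfolding T_def by (rule norm_sum)
    also have "\<dots> \<le> ?Q * \<epsilon>"
      using sum_bounded_above[of "{K..<K + ?Q}" "\<lambda>k. norm (h (flip_germ k s (v k s)))" \<epsilon>] v by simp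
    finally show ?thesis .
  qed
  have "of_nat ?A * T False - of_nat (?Q - ?A) * T True = of_nat ?A * of_nat ?Q * h (z_e n \<alpha>)"
    unfolding T_def z using trace_bit_window_identity[of b c r K] K by simp
  hence "?A * ?Q * norm (h (z_e n \<alpha>)) = norm (of_nat ?A * T False - of_nat (?Q - ?A) * T True)"
    by (simp add: norm_mult)
  also have "\<dots> \<le> ?A * (?Q * \<epsilon>) + (?Q - ?A) * (?Q * \<epsilon>)"
    using T_le[of False] T_le[of True]
    by (intro order_trans[OF norm_triangle_ineq4] add_mono) (simp_all add: norm_mult mult_left_mono)
  also have "\<dots> = ?Q * (?Q * \<epsilon>)"
    using card_trace_nonzero_bounds(2) by (simp add: of_nat_diff algebra_simps)
  finally show ?thesis using alpha_ord_pos by (simp add: mult.assoc)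
qed

lemma approximant_small_on_flip_germs:
  assumes "\<nexists>W. G_open n \<alpha> W \<and> W \<noteq> {} \<and> W \<subseteq> gsupp n \<alpha> f"
    and "\<forall>x\<in>Grpd n \<alpha>. norm (h x - f x) < \<epsilon>"
  shows "\<exists>v. norm (h (flip_germ k s v)) \<le> \<epsilon>"
proof -
  have "\<not> range (flip_germ k s) \<subseteq> gsupp n \<alpha> f"
    using assms(1) G_open_range_flip_germ by blast
  then obtain v where "f (flip_germ k s v) = 0"
    using flip_germ_in_Grpd by (auto simp: gsupp_def)
  moreover have "norm (h (flip_germ k s v) - f (flip_germ k s v)) < \<epsilon>"
    using assms(2) flip_germ_in_Grpd by blast
  ultimately show ?thesis by (intro exI[of _ v]) simp
qed

lemma z_e_in_Grpd: "z_e n \<alpha> \<in> Grpd n \<alpha>"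
  unfolding iota_germ_zero[symmetric] iota_germ_def by (rule germ_in_Grpd[OF iota_germ_GDom])

end

theorem mainTheorem12:
  fixes n :: nat and \<alpha> :: "'k::{field,finite}"
    and f :: "germ \<Rightarrow> complex" and F :: "nat \<Rightarrow> germ \<Rightarrow> complex"
  assumes "n \<ge> 2"
    and "card (UNIV :: 'k set) = 2 ^ n"
    and "\<forall>\<beta>::'k. \<beta> \<noteq> 0 \<longrightarrow> (\<exists>k::nat. \<beta> = \<alpha> ^ k)"
    and "bounded_on_G n \<alpha> f"
    and "f (z_e n \<alpha>) \<noteq> 0"
    and "\<forall>j. F j \<in> steinberg n \<alpha>"
    and "\<forall>e>0. \<exists>N. \<forall>j\<ge>N. \<forall>x\<in>Grpd n \<alpha>. norm (F j x - f x) < e"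
  shows "\<exists>W. G_open n \<alpha> W \<and> W \<noteq> {} \<and> W \<subseteq> gsupp n \<alpha> f"
proof (rule ccontr)
  interpret primitive_field n \<alpha> using assms(1-3) by unfold_locales auto
  assume no_interior: "\<nexists>W. G_open n \<alpha> W \<and> W \<noteq> {} \<and> W \<subseteq> gsupp n \<alpha> f"
  let ?A = "real (card {x::'k. trace n x \<noteq> 0})" and ?Q = "real alpha_ord"
  define \<delta> where "\<delta> = norm (f (z_e n \<alpha>))"
  define \<epsilon> where "\<epsilon> = ?A * \<delta> / (2 * ?Q)"
  have "0 < \<delta>" using assms(5) by (simp add: \<delta>_def)
  hence "0 < \<epsilon>" "\<epsilon> \<le> \<delta> / 2"
    using card_trace_nonzero_bounds alpha_ord_pos by (simp_all add: \<epsilon>_def field_simps)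
  then obtain N where N: "\<forall>x\<in>Grpd n \<alpha>. norm (F N x - f x) < \<epsilon>"
    using assms(7) by blast
  hence "\<forall>k s. \<exists>v. norm (F N (flip_germ k s v)) \<le> \<epsilon>"
    using approximant_small_on_flip_germs[OF no_interior] by blast
  hence "?A * norm (F N (z_e n \<alpha>)) \<le> ?Q * \<epsilon>"
    using steinberg_norm_z_e_le assms(6) by blast
  hence "norm (F N (z_e n \<alpha>)) \<le> \<delta> / 2"
    using card_trace_nonzero_bounds alpha_ord_pos by (simp add: \<epsilon>_def field_simps)
  moreover have "\<delta> - \<epsilon> < norm (F N (z_e n \<alpha>))"
    using N z_e_in_Grpd norm_triangle_ineq2[of "f (z_e n \<alpha>)" "F N (z_e n \<alpha>)"]
    by (force simp: \<delta>_def norm_minus_commute)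
  ultimately show False using \<open>\<epsilon> \<le> \<delta> / 2\<close> by linarith
qed

end
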